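(* Let $N\geqslant3$, $s\in(0,1)$ and $p\in(2^*_s,2^* )$. For all $u\in\mathcal M$ we have $P'(u)\neq0$.
   Context: $2^*=\frac{2N}{N-2}$, $2^*_s=\frac{2N}{N-2s}$. $\|u\|_{D^{1,2}}^2=\int_{\mathbb{R}^N}|\nabla u|^2\,\mathrm{d}x$, $\|u\|_{D^{s,2}}^2=\int_{\mathbb{R}^N}\int_{\mathbb{R}^N}\frac{|u(x)-u(y)|^2}{|x-y|^{N+2s}}\,\mathrm{d}x\,\mathrm{d}y$; $E$ is the completion of $C_0^\infty(\mathbb{R}^N)$ under $\|u\|_E^2=\|u\|_{D^{1,2}}^2+\|u\|_{D^{s,2}}^2$. $P(u)=\frac{N-2}{2}\|u\|_{D^{1,2}}^2+\frac{N-2s}{2}\|u\|_{D^{s,2}}^2-\frac Np\int_{\mathbb{R}^N}|u|^p\,\mathrm{d}x$, a $C^1$ functional on $E$; $\mathcal M=\{u\in E\setminus\{0\}:P(u)=0\}$. *)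

theory Defs
  imports "HOL-Analysis.Analysis"
begin

text \<open>Functions on R^N are modelled as real ^ 'n => real with N = CARD('n).\<close>

definition critS :: "nat \<Rightarrow> real" where
  "critS N = 2 * real N / (real N - 2)"

definition critFrac :: "nat \<Rightarrow> real \<Rightarrow> real" where
  "critFrac N s = 2 * real N / (real N - 2 * s)"

fun iter_partial :: "'n::finite list \<Rightarrow> (real ^ 'n \<Rightarrow> real) \<Rightarrow> real ^ 'n \<Rightarrow> real" where
  "iter_partial [] f = f"
| "iter_partial (i # is) f = (\<lambda>x. frechet_derivative (iter_partial is f) (at x) (axis i 1))"

text \<open>C_0^infinity: all iterated partial derivatives exist and are differentiable everywhere,
  and the function has bounded (hence compact closure) support.\<close>
definition test_fun :: "(real ^ 'n::finite \<Rightarrow> real) \<Rightarrow> bool" where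
  "test_fun f \<longleftrightarrow> (\<forall>is. \<forall>x. iter_partial is f differentiable (at x)) \<and> bounded {x. f x \<noteq> 0}"

definition grad_sq :: "(real ^ 'n::finite \<Rightarrow> real) \<Rightarrow> real ^ 'n \<Rightarrow> real" where
  "grad_sq f x = (\<Sum>i\<in>UNIV. (frechet_derivative f (at x) (axis i 1))^2)"

definition D12sq_test :: "(real ^ 'n::finite \<Rightarrow> real) \<Rightarrow> real" where
  "D12sq_test f = integral\<^sup>L lborel (grad_sq f)"

definition Gag_enn :: "real \<Rightarrow> (real ^ 'n::finite \<Rightarrow> real) \<Rightarrow> ennreal" where
  "Gag_enn s u = (\<integral>\<^sup>+ x. \<integral>\<^sup>+ y. ennreal ((u x - u y)^2 / (norm (x - y) powr (real CARD('n) + 2 * s))) \<partial>lborel \<partial>lborel)"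

definition Gag :: "real \<Rightarrow> (real ^ 'n::finite \<Rightarrow> real) \<Rightarrow> real" where
  "Gag s u = enn2real (Gag_enn s u)"

definition Lp_pow :: "real \<Rightarrow> (real ^ 'n::finite \<Rightarrow> real) \<Rightarrow> ennreal" where
  "Lp_pow q u = (\<integral>\<^sup>+ x. ennreal (\<bar>u x\<bar> powr q) \<partial>lborel)"

text \<open>phi is a sequence of test functions, Cauchy for the norm of E, whose limit
  (identified through the Sobolev embedding E into L^{2^*}) is u.\<close>
definition approx_seq :: "real \<Rightarrow> (real ^ 'n::finite \<Rightarrow> real) \<Rightarrow> (nat \<Rightarrow> real ^ 'n \<Rightarrow> real) \<Rightarrow> bool" where
  "approx_seq s u \<phi> \<longleftrightarrow>
     (\<forall>k. test_fun (\<phi> k)) \<and>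
     (\<forall>e>0. \<exists>K. \<forall>k\<ge>K. \<forall>m\<ge>K.
        D12sq_test (\<lambda>x. \<phi> k x - \<phi> m x) + Gag s (\<lambda>x. \<phi> k x - \<phi> m x) < e) \<and>
     ((\<lambda>k. Lp_pow (critS CARD('n)) (\<lambda>x. \<phi> k x - u x)) \<longlonglongrightarrow> 0)"

text \<open>The space E (completion of C_0^infinity under the norm of E), realized as functions.\<close>
definition Espace :: "real \<Rightarrow> (real ^ 'n::finite \<Rightarrow> real) set" where
  "Espace s = {u. u \<in> borel_measurable lborel \<and> (\<exists>\<phi>. approx_seq s u \<phi>)}"

text \<open>D^{1,2} seminorm squared on E, extended by continuity from test functions.\<close>
definition D12sq :: "real \<Rightarrow> (real ^ 'n::finite \<Rightarrow> real) \<Rightarrow> real" where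
  "D12sq s u = lim (\<lambda>k. D12sq_test ((SOME \<phi>. approx_seq s u \<phi>) k))"

definition Pfun :: "real \<Rightarrow> real \<Rightarrow> (real ^ 'n::finite \<Rightarrow> real) \<Rightarrow> real" where
  "Pfun s p u = (real CARD('n) - 2) / 2 * D12sq s u + (real CARD('n) - 2 * s) / 2 * Gag s u
     - real CARD('n) / p * integral\<^sup>L lborel (\<lambda>x. \<bar>u x\<bar> powr p)"

text \<open>Pohozaev manifold; u \<noteq> 0 in E means u is not a.e. zero.\<close>
definition Mset :: "real \<Rightarrow> real \<Rightarrow> (real ^ 'n::finite \<Rightarrow> real) set" where
  "Mset s p = {u \<in> Espace s. \<not> (AE x in lborel. u x = 0) \<and> Pfun s p u = 0}"

end

(*
  Test P'(u) in the direction u itself. Along the ray t |-> (1 + t) u both seminorms scale by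
  (1 + t)^2 and the L^p term by |1 + t|^p, so
    P((1 + t) u) = (1 + t)^2 X - (N/p) |1 + t|^p int |u|^p,
    X = (N - 2)/2 |u|^2_{D^{1,2}} + (N - 2s)/2 |u|^2_{D^{s,2}}.
  Since P(u) = 0, the derivative at t = 0 is 2 X - N int |u|^p = (2 - p) X, which is nonzero
  because p > 2 and X > 0: the Gagliardo seminorm of a nonzero u in E is positive (a function with
  vanishing seminorm is a.e. constant, and a nonzero constant is not an L^{2^*} limit of compactly
  supported functions) and finite (Fatou's lemma along an a.e. convergent subsequence of an
  approximating sequence, plus integrability of min(|z|^2, 1) / |z|^{N+2s}).
  The D^{1,2} seminorm on E is the limit along a chosen approximating sequence of test functions;
  that it scales quadratically rests on closability of the gradient form, which follows from
  integration by parts against test functions.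
*)

theory Submission
  imports Defs
begin

definition partial_deriv :: "'n::finite \<Rightarrow> (real ^ 'n \<Rightarrow> real) \<Rightarrow> real ^ 'n \<Rightarrow> real" where
  "partial_deriv i f = (\<lambda>x. frechet_derivative f (at x) (axis i 1))"

definition smooth_fun :: "(real ^ 'n::finite \<Rightarrow> real) \<Rightarrow> bool" where
  "smooth_fun f \<longleftrightarrow> (\<forall>is x. iter_partial is f differentiable (at x))"

lemma iter_partial_append: "iter_partial is (iter_partial js f) = iter_partial (is @ js) f"
  by (induction "is") auto

lemma frechet_derivative_lincomb:
  fixes f g :: "'a::real_normed_vector \<Rightarrow> real"
  assumes "f differentiable (at x)" "g differentiable (at x)"
  shows "frechet_derivative (\<lambda>x. a * f x + b * g x) (at x) =
    (\<lambda>v. a * frechet_derivative f (at x) v + b * frechet_derivative g (at x) v)"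
proof (rule frechet_derivative_at[symmetric])
  show "((\<lambda>x. a * f x + b * g x) has_derivative
      (\<lambda>v. a * frechet_derivative f (at x) v + b * frechet_derivative g (at x) v)) (at x)"
    using assms unfolding frechet_derivative_works by (auto intro!: derivative_eq_intros)
qed

lemma iter_partial_lincomb:
  assumes "smooth_fun f" "smooth_fun g"
  shows "iter_partial is (\<lambda>x. a * f x + b * g x) =
    (\<lambda>x. a * iter_partial is f x + b * iter_partial is g x)"
proof (induction "is")
  case (Cons i "is")
  then show ?case using assms unfolding smooth_fun_def by (simp add: frechet_derivative_lincomb)
qed simp

lemma smooth_fun_lincomb:
  assumes "smooth_fun f" "smooth_fun g"
  shows "smooth_fun (\<lambda>x. a * f x + b * g x)"
  using assms unfolding smooth_fun_def iter_partial_lincomb[OF assms]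
  by (auto intro!: differentiable_compose[where f="\<lambda>x. x"] derivative_intros)

lemma test_fun_smooth_fun: "test_fun f \<Longrightarrow> smooth_fun f"
  by (simp add: test_fun_def smooth_fun_def)

lemma test_fun_lincomb:
  assumes "test_fun f" "test_fun g"
  shows "test_fun (\<lambda>x. a * f x + b * g x)"
proof -
  have "{x. a * f x + b * g x \<noteq> 0} \<subseteq> {x. f x \<noteq> 0} \<union> {x. g x \<noteq> 0}" by auto
  then have "bounded {x. a * f x + b * g x \<noteq> 0}"
    using assms unfolding test_fun_def by (meson bounded_Un bounded_subset)
  then show ?thesis
    using smooth_fun_lincomb[OF test_fun_smooth_fun[OF assms(1)] test_fun_smooth_fun[OF assms(2)]]
    unfolding test_fun_def smooth_fun_def by blast
qed

lemma test_fun_diff: "test_fun f \<Longrightarrow> test_fun g \<Longrightarrow> test_fun (\<lambda>x. f x - g x)"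
  using test_fun_lincomb[of f g 1 "-1"] by simp

lemma test_fun_cmult: "test_fun f \<Longrightarrow> test_fun (\<lambda>x. c * f x)"
  using test_fun_lincomb[of f f c 0] by simp

lemma test_fun_iter_partial_vanishing:
  assumes "test_fun f"
  obtains R where "\<And>is x. R < norm x \<Longrightarrow> iter_partial is f x = 0"
proof -
  obtain R where R: "\<And>x. f x \<noteq> 0 \<Longrightarrow> norm x \<le> R"
    using assms unfolding test_fun_def bounded_iff by auto
  have "\<forall>x. R < norm x \<longrightarrow> iter_partial is f x = 0" for "is"
  proof (induction "is")
    case Nil then show ?case using R by force
  next
    case (Cons i "is")
    show ?case
    proof (intro allI impI)
      fix x :: "real ^ 'a" assume x: "R < norm x"
      \<comment> \<open>near \<open>x\<close> the function \<open>iter_partial is f\<close> is identically zero\<close>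
      have "(iter_partial is f has_derivative (\<lambda>v. 0)) (at x)"
        by (rule has_derivative_transform_within_open[where f="\<lambda>y. 0" and s="{y. R < norm y}"])
           (use x Cons in \<open>auto intro: open_Collect_less continuous_intros\<close>)
      then show "iter_partial (i # is) f x = 0"
        by (simp add: frechet_derivative_at[symmetric])
    qed
  qed
  then show ?thesis using that by blast
qed

lemma test_fun_iter_partial:
  assumes "test_fun f"
  shows "test_fun (iter_partial js f)"
proof -
  obtain R where "\<And>is x. R < norm x \<Longrightarrow> iter_partial is f x = 0"
    using test_fun_iter_partial_vanishing[OF assms] by blast
  then have "bounded {x. iter_partial js f x \<noteq> 0}"
    by (intro bounded_subset[OF bounded_cball[of 0 R]]) force
  then show ?thesis using assms unfolding test_fun_def iter_partial_append by auto
qed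

lemma test_fun_partial_deriv: "test_fun f \<Longrightarrow> test_fun (partial_deriv i f)"
  using test_fun_iter_partial[of f "[i]"] by (simp add: partial_deriv_def)

lemma test_fun_vanishing:
  assumes "test_fun f"
  obtains R where "\<And>x. R < norm x \<Longrightarrow> f x = 0"
  using test_fun_iter_partial_vanishing[OF assms] by (metis iter_partial.simps(1))

lemma test_fun_differentiable: "test_fun f \<Longrightarrow> f differentiable (at x)"
  unfolding test_fun_def by (metis iter_partial.simps(1))

lemma test_fun_continuous: "test_fun f \<Longrightarrow> continuous_on UNIV f"
  by (meson continuous_at_imp_continuous_on differentiable_imp_continuous_within
      test_fun_differentiable)

lemma test_fun_borel_measurable: "test_fun f \<Longrightarrow> f \<in> borel_measurable borel"
  by (simp add: borel_measurable_continuous_onI test_fun_continuous)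

lemma integrable_vanishing_outside_ball:
  fixes g :: "'a::euclidean_space \<Rightarrow> real"
  assumes "continuous_on UNIV g" "\<And>x. R < norm x \<Longrightarrow> g x = 0"
  shows "integrable lborel g"
proof -
  have "integrable lborel (\<lambda>x. indicator (cball 0 R) x *\<^sub>R g x)"
    by (rule borel_integrable_compact) (use assms in \<open>auto intro: continuous_on_subset\<close>)
  also have "(\<lambda>x. indicator (cball 0 R) x *\<^sub>R g x) = g"
    using assms(2) by (auto simp: fun_eq_iff indicator_def)
  finally show ?thesis .
qed

lemma bounded_vanishing_outside_ball:
  fixes g :: "'a::euclidean_space \<Rightarrow> real"
  assumes "continuous_on UNIV g" "\<And>x. R < norm x \<Longrightarrow> g x = 0"
  obtains M where "M \<ge> 0" "\<And>x. \<bar>g x\<bar> \<le> M"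
proof -
  have "compact (g ` cball 0 R)"
    by (rule compact_continuous_image) (use assms in \<open>auto intro: continuous_on_subset\<close>)
  then obtain M where M: "\<And>y. y \<in> g ` cball 0 R \<Longrightarrow> norm y \<le> M"
    using compact_imp_bounded bounded_iff by metis
  show ?thesis
  proof (rule that[of "max M 0"])
    show "\<bar>g x\<bar> \<le> max M 0" for x
      using M[of "g x"] assms(2)[of x] by (cases "norm x \<le> R") auto
  qed simp
qed

lemma test_fun_bounded:
  assumes "test_fun f"
  obtains M where "M \<ge> 0" "\<And>x. \<bar>f x\<bar> \<le> M"
  using test_fun_vanishing[OF assms] test_fun_continuous[OF assms]
    bounded_vanishing_outside_ball[of f] by metis

lemma test_fun_mult_integrable:
  assumes "test_fun f" "continuous_on UNIV g"
  shows "integrable lborel (\<lambda>x. f x * g x)"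
proof -
  obtain R where "\<And>x. R < norm x \<Longrightarrow> f x = 0"
    using test_fun_vanishing[OF assms(1)] by blast
  then show ?thesis
    by (intro integrable_vanishing_outside_ball[where R=R])
       (use test_fun_continuous[OF assms(1)] assms(2) in \<open>auto intro!: continuous_intros\<close>)
qed

lemma test_fun_integrable: "test_fun f \<Longrightarrow> integrable lborel f"
  using test_fun_mult_integrable[of f "\<lambda>_. 1"] by simp

lemma test_fun_Lp_pow:
  assumes "test_fun f" "q > 0"
  shows "integrable lborel (\<lambda>x. \<bar>f x\<bar> powr q)"
    and "Lp_pow q f = ennreal (integral\<^sup>L lborel (\<lambda>x. \<bar>f x\<bar> powr q))"
proof -
  obtain R where R: "\<And>x. R < norm x \<Longrightarrow> f x = 0" using test_fun_vanishing[OF assms(1)] by blast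
  have "continuous_on UNIV (\<lambda>x. \<bar>f x\<bar> powr q)"
    using test_fun_continuous[OF assms(1)] assms(2)
    by (intro continuous_on_powr') (auto intro: continuous_intros)
  then show int: "integrable lborel (\<lambda>x. \<bar>f x\<bar> powr q)"
    by (rule integrable_vanishing_outside_ball[where R=R]) (use R assms(2) in auto)
  show "Lp_pow q f = ennreal (integral\<^sup>L lborel (\<lambda>x. \<bar>f x\<bar> powr q))"
    unfolding Lp_pow_def by (rule nn_integral_eq_integral[OF int]) auto
qed

lemma frechet_derivative_bound:
  fixes f :: "real ^ 'n::finite \<Rightarrow> real"
  assumes "f differentiable (at x)"
  shows "\<bar>frechet_derivative f (at x) v\<bar> \<le> (\<Sum>i\<in>UNIV. \<bar>partial_deriv i f x\<bar>) * norm v"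
proof -
  have lin: "linear (frechet_derivative f (at x))"
    using assms has_derivative_linear unfolding frechet_derivative_works by blast
  have "frechet_derivative f (at x) v = frechet_derivative f (at x) (\<Sum>i\<in>UNIV. v $ i *s axis i 1)"
    by (simp add: basis_expansion)
  also have "\<dots> = (\<Sum>i\<in>UNIV. v $ i * partial_deriv i f x)"
    using lin by (simp add: linear_sum linear_cmul partial_deriv_def scalar_mult_eq_scaleR)
  finally have "\<bar>frechet_derivative f (at x) v\<bar> \<le> (\<Sum>i\<in>UNIV. \<bar>v $ i * partial_deriv i f x\<bar>)"
    by (simp add: sum_abs)
  also have "\<dots> \<le> (\<Sum>i\<in>UNIV. norm v * \<bar>partial_deriv i f x\<bar>)"
    by (intro sum_mono) (simp add: abs_mult mult_right_mono component_le_norm_cart)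
  finally show ?thesis by (simp add: sum_distrib_left mult.commute)
qed

lemma test_fun_lipschitz:
  assumes "test_fun f"
  obtains L where "\<And>x y. \<bar>f x - f y\<bar> \<le> L * norm (x - y)"
proof -
  have "\<forall>i. \<exists>M. \<forall>x. \<bar>partial_deriv i f x\<bar> \<le> M"
    using test_fun_bounded[OF test_fun_partial_deriv[OF assms]] by metis
  then obtain M where M: "\<And>i x. \<bar>partial_deriv i f x\<bar> \<le> M i"
    by metis
  define L where "L = (\<Sum>i\<in>UNIV. M i)"
  have "norm (f x - f y) \<le> L * norm (x - y)" for x y
  proof (rule differentiable_bound[where S=UNIV and f'="\<lambda>x. frechet_derivative f (at x)"])
    show "(f has_derivative frechet_derivative f (at z)) (at z within UNIV)" for z
      using test_fun_differentiable[OF assms] frechet_derivative_works by auto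
    show "onorm (frechet_derivative f (at z)) \<le> L" for z
    proof (rule onorm_le)
      fix v
      have "\<bar>frechet_derivative f (at z) v\<bar> \<le> (\<Sum>i\<in>UNIV. \<bar>partial_deriv i f z\<bar>) * norm v"
        by (rule frechet_derivative_bound[OF test_fun_differentiable[OF assms]])
      also have "\<dots> \<le> L * norm v"
        unfolding L_def by (intro mult_right_mono sum_mono M) auto
      finally show "norm (frechet_derivative f (at z) v) \<le> L * norm v" by simp
    qed
  qed auto
  then show ?thesis using that by auto
qed

definition dirichlet_form :: "(real ^ 'n::finite \<Rightarrow> real) \<Rightarrow> (real ^ 'n \<Rightarrow> real) \<Rightarrow> real" where
  "dirichlet_form f g = (\<Sum>i\<in>UNIV. integral\<^sup>L lborel (\<lambda>x. partial_deriv i f x * partial_deriv i g x))"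

lemma partial_deriv_mult_integrable:
  "test_fun f \<Longrightarrow> test_fun g \<Longrightarrow> integrable lborel (\<lambda>x. partial_deriv i f x * partial_deriv j g x)"
  by (intro test_fun_mult_integrable test_fun_partial_deriv test_fun_continuous)

lemma partial_deriv_lincomb:
  assumes "test_fun f" "test_fun g"
  shows "partial_deriv i (\<lambda>x. a * f x + b * g x) x = a * partial_deriv i f x + b * partial_deriv i g x"
  using iter_partial_lincomb[OF test_fun_smooth_fun[OF assms(1)] test_fun_smooth_fun[OF assms(2)],
      of "[i]" a b]
  by (simp add: partial_deriv_def fun_eq_iff)

lemma D12sq_test_eq_dirichlet_form:
  assumes "test_fun f"
  shows "D12sq_test f = dirichlet_form f f"
proof -
  have "D12sq_test f = integral\<^sup>L lborel (\<lambda>x. \<Sum>i\<in>UNIV. partial_deriv i f x * partial_deriv i f x)"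
    unfolding D12sq_test_def grad_sq_def partial_deriv_def by (simp add: power2_eq_square)
  also have "\<dots> = dirichlet_form f f"
    unfolding dirichlet_form_def
    by (intro Bochner_Integration.integral_sum partial_deriv_mult_integrable assms)
  finally show ?thesis .
qed

lemma D12sq_test_nonneg: "D12sq_test f \<ge> 0"
  unfolding D12sq_test_def grad_sq_def by (simp add: integral_nonneg_AE sum_nonneg)

lemma dirichlet_form_commute: "dirichlet_form f g = dirichlet_form g f"
  unfolding dirichlet_form_def by (simp add: mult.commute)

lemma dirichlet_form_lincomb_left:
  assumes "test_fun f" "test_fun g" "test_fun h"
  shows "dirichlet_form (\<lambda>x. a * f x + b * g x) h = a * dirichlet_form f h + b * dirichlet_form g h"
proof -
  have "dirichlet_form (\<lambda>x. a * f x + b * g x) h = (\<Sum>i\<in>UNIV.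
      integral\<^sup>L lborel (\<lambda>x. a * (partial_deriv i f x * partial_deriv i h x) +
        b * (partial_deriv i g x * partial_deriv i h x)))"
    unfolding dirichlet_form_def partial_deriv_lincomb[OF assms(1,2)] by (simp add: algebra_simps)
  also have "\<dots> = a * dirichlet_form f h + b * dirichlet_form g h"
    unfolding dirichlet_form_def sum_distrib_left sum.distrib[symmetric]
    by (intro sum.cong refl)
       (simp add: partial_deriv_mult_integrable[OF assms(1,3)] partial_deriv_mult_integrable[OF assms(2,3)])
  finally show ?thesis .
qed

lemma D12sq_test_lincomb:
  assumes "test_fun f" "test_fun g"
  shows "D12sq_test (\<lambda>x. a * f x + b * g x) =
    a\<^sup>2 * D12sq_test f + 2 * a * b * dirichlet_form f g + b\<^sup>2 * D12sq_test g"
proof -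
  let ?h = "\<lambda>x. a * f x + b * g x"
  have "D12sq_test ?h = a * dirichlet_form f ?h + b * dirichlet_form g ?h"
    by (simp only: D12sq_test_eq_dirichlet_form test_fun_lincomb assms dirichlet_form_lincomb_left)
  also have "\<dots> = a * (a * dirichlet_form f f + b * dirichlet_form f g) +
      b * (a * dirichlet_form f g + b * dirichlet_form g g)"
    using dirichlet_form_lincomb_left[OF assms assms(1), of a b]
      dirichlet_form_lincomb_left[OF assms assms(2), of a b]
    by (simp only: dirichlet_form_commute[of _ ?h] dirichlet_form_commute[of g f])
  also have "\<dots> = a\<^sup>2 * D12sq_test f + 2 * a * b * dirichlet_form f g + b\<^sup>2 * D12sq_test g"
    by (simp add: D12sq_test_eq_dirichlet_form assms power2_eq_square algebra_simps)
  finally show ?thesis .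
qed

lemma D12sq_test_cmult: "test_fun f \<Longrightarrow> D12sq_test (\<lambda>x. c * f x) = c\<^sup>2 * D12sq_test f"
  using D12sq_test_lincomb[of f f c 0] by simp

lemma dirichlet_form_Cauchy_Schwarz:
  assumes "test_fun f" "test_fun g"
  shows "\<bar>dirichlet_form f g\<bar> \<le> sqrt (D12sq_test f) * sqrt (D12sq_test g)"
proof -
  define A B C where "A = D12sq_test f" and "B = dirichlet_form f g" and "C = D12sq_test g"
  have quadratic: "t\<^sup>2 * A - 2 * t * B + C \<ge> 0" for t
    using D12sq_test_lincomb[OF assms, of t "-1"] D12sq_test_nonneg[of "\<lambda>x. t * f x + - 1 * g x"]
    unfolding A_def B_def C_def by simp
  have "B\<^sup>2 \<le> A * C"
  proof (cases "A = 0")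
    case True
    have "B = 0"
    proof (rule ccontr)
      assume "B \<noteq> 0"
      then show False using quadratic[of "(C + 1) / (2 * B)"] True by (simp add: field_simps)
    qed
    then show ?thesis using True by simp
  next
    case False
    then have "A > 0" using D12sq_test_nonneg[of f] unfolding A_def by linarith
    have "0 \<le> (B / A)\<^sup>2 * A - 2 * (B / A) * B + C" by (rule quadratic)
    also have "\<dots> = C - B\<^sup>2 / A" using \<open>A > 0\<close> by (simp add: field_simps power2_eq_square)
    finally show ?thesis using \<open>A > 0\<close> by (simp add: field_simps)
  qed
  then have "sqrt (B\<^sup>2) \<le> sqrt (A * C)" by (rule real_sqrt_le_mono)
  then show ?thesis unfolding A_def B_def C_def by (simp add: real_sqrt_mult)
qed

lemma sqrt_D12sq_test_add_le:
  assumes "test_fun f" "test_fun g"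
  shows "sqrt (D12sq_test (\<lambda>x. f x + g x)) \<le> sqrt (D12sq_test f) + sqrt (D12sq_test g)"
proof -
  have "D12sq_test (\<lambda>x. f x + g x) = D12sq_test f + 2 * dirichlet_form f g + D12sq_test g"
    using D12sq_test_lincomb[OF assms, of 1 1] by simp
  also have "\<dots> \<le> (sqrt (D12sq_test f) + sqrt (D12sq_test g))\<^sup>2"
    using dirichlet_form_Cauchy_Schwarz[OF assms] D12sq_test_nonneg[of f] D12sq_test_nonneg[of g]
    by (simp add: power2_sum)
  finally show ?thesis
    using real_sqrt_le_mono D12sq_test_nonneg[of f] D12sq_test_nonneg[of g] by fastforce
qed

lemma sqrt_D12sq_test_diff_le:
  assumes "test_fun f" "test_fun g"
  shows "\<bar>sqrt (D12sq_test f) - sqrt (D12sq_test g)\<bar> \<le> sqrt (D12sq_test (\<lambda>x. f x - g x))"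
  using sqrt_D12sq_test_add_le[OF test_fun_diff[OF assms] assms(2)]
    sqrt_D12sq_test_add_le[OF test_fun_diff[OF assms(2,1)] assms(1)]
    D12sq_test_cmult[OF test_fun_diff[OF assms], of "-1"]
  by (simp add: abs_le_iff)

lemma D12sq_test_lincomb_le:
  assumes "test_fun f" "test_fun g"
  shows "D12sq_test (\<lambda>x. a * f x + b * g x) \<le> 2 * a\<^sup>2 * D12sq_test f + 2 * b\<^sup>2 * D12sq_test g"
proof -
  define X Y where "X = \<bar>a\<bar> * sqrt (D12sq_test f)" and "Y = \<bar>b\<bar> * sqrt (D12sq_test g)"
  have "2 * a * b * dirichlet_form f g \<le> 2 * (\<bar>a\<bar> * \<bar>b\<bar>) * \<bar>dirichlet_form f g\<bar>"
    by (simp add: abs_mult[symmetric] mult.assoc)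
  also have "\<dots> \<le> 2 * (\<bar>a\<bar> * \<bar>b\<bar>) * (sqrt (D12sq_test f) * sqrt (D12sq_test g))"
    by (intro mult_left_mono dirichlet_form_Cauchy_Schwarz assms) auto
  also have "\<dots> = 2 * X * Y" unfolding X_def Y_def by (simp add: algebra_simps)
  also have "\<dots> \<le> X\<^sup>2 + Y\<^sup>2" using sum_squares_bound[of X Y] by (simp add: power2_eq_square)
  also have "\<dots> = a\<^sup>2 * D12sq_test f + b\<^sup>2 * D12sq_test g"
    unfolding X_def Y_def using D12sq_test_nonneg[of f] D12sq_test_nonneg[of g]
    by (simp add: power_mult_distrib)
  finally have "2 * a * b * dirichlet_form f g \<le> a\<^sup>2 * D12sq_test f + b\<^sup>2 * D12sq_test g" .
  then show ?thesis
    unfolding D12sq_test_lincomb[OF assms] by linarith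
qed

lemma integral_lborel_translate:
  fixes g :: "'a::euclidean_space \<Rightarrow> real"
  assumes [measurable]: "g \<in> borel_measurable borel"
  shows "integral\<^sup>L lborel (\<lambda>x. g (c + x)) = integral\<^sup>L lborel g"
proof -
  have "integral\<^sup>L lborel g = integral\<^sup>L (distr lborel borel ((+) c)) g"
    by (simp add: lborel_distr_plus)
  also have "\<dots> = integral\<^sup>L lborel (\<lambda>x. g (c + x))"
    by (rule integral_distr) auto
  finally show ?thesis by simp
qed

lemma difference_quotient_tendsto:
  fixes g :: "'a::real_normed_vector \<Rightarrow> real"
  assumes "g differentiable (at x)" "\<tau> \<longlonglongrightarrow> 0" "\<And>n. \<tau> n \<noteq> 0"
  shows "(\<lambda>n. (g (x + \<tau> n *\<^sub>R e) - g x) / \<tau> n) \<longlonglongrightarrow> frechet_derivative g (at x) e"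
proof -
  have g': "(g has_derivative frechet_derivative g (at x)) (at x)"
    using assms(1) frechet_derivative_works by blast
  have line: "((\<lambda>t::real. x + t *\<^sub>R e) has_derivative (\<lambda>t. t *\<^sub>R e)) (at 0)"
    by (auto intro!: derivative_eq_intros)
  have "((g \<circ> (\<lambda>t. x + t *\<^sub>R e)) has_derivative (frechet_derivative g (at x) \<circ> (\<lambda>t. t *\<^sub>R e))) (at 0)"
    by (rule diff_chain_at[OF line]) (simp add: g')
  then have "((\<lambda>t. g (x + t *\<^sub>R e)) has_derivative (\<lambda>t. t * frechet_derivative g (at x) e)) (at 0)"
    by (simp add: linear_cmul[OF has_derivative_linear[OF g']] o_def)
  then have "((\<lambda>t. g (x + t *\<^sub>R e)) has_field_derivative frechet_derivative g (at x) e) (at 0)"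
    by (rule has_derivative_imp_has_field_derivative) simp
  then have "((\<lambda>t. (g (x + t *\<^sub>R e) - g x) / t) \<longlongrightarrow> frechet_derivative g (at x) e) (at 0)"
    unfolding DERIV_def by simp
  moreover have "filterlim \<tau> (at 0) sequentially"
    using assms(2,3) by (simp add: filterlim_at)
  ultimately show ?thesis by (rule filterlim_compose)
qed

lemma integral_difference_quotient_tendsto:
  fixes f g :: "real ^ 'n::finite \<Rightarrow> real"
  assumes f: "test_fun f" and g: "integrable lborel g"
    and \<tau>: "\<tau> \<longlonglongrightarrow> 0" "\<And>n. \<tau> n \<noteq> 0"
  shows "(\<lambda>n. integral\<^sup>L lborel (\<lambda>x. (f (x + \<tau> n *\<^sub>R e) - f x) / \<tau> n * g x))
    \<longlonglongrightarrow> integral\<^sup>L lborel (\<lambda>x. frechet_derivative f (at x) e * g x)"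
proof -
  obtain L where L: "\<And>x y. \<bar>f x - f y\<bar> \<le> L * norm (x - y)"
    using test_fun_lipschitz[OF f] by blast
  note [measurable] = test_fun_borel_measurable[OF f] borel_measurable_integrable[OF g]
  have [measurable]: "(\<lambda>x. frechet_derivative f (at x) e) \<in> borel_measurable borel"
    by (rule borel_measurable_LIMSEQ_real[OF difference_quotient_tendsto])
       (use test_fun_differentiable[OF f] \<tau> in auto)
  show ?thesis
  proof (rule integral_dominated_convergence[where w="\<lambda>x. L * norm e * \<bar>g x\<bar>"])
    show "AE x in lborel. (\<lambda>n. (f (x + \<tau> n *\<^sub>R e) - f x) / \<tau> n * g x)
        \<longlonglongrightarrow> frechet_derivative f (at x) e * g x"
      by (intro AE_I2 tendsto_mult tendsto_const difference_quotient_tendsto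
          test_fun_differentiable[OF f] \<tau>)
    show "AE x in lborel. norm ((f (x + \<tau> n *\<^sub>R e) - f x) / \<tau> n * g x) \<le> L * norm e * \<bar>g x\<bar>" for n
    proof (rule AE_I2)
      fix x
      have "\<bar>f (x + \<tau> n *\<^sub>R e) - f x\<bar> \<le> L * norm e * \<bar>\<tau> n\<bar>"
        using L[of "x + \<tau> n *\<^sub>R e" x] by (simp add: mult_ac)
      then have "\<bar>(f (x + \<tau> n *\<^sub>R e) - f x) / \<tau> n\<bar> \<le> L * norm e"
        using \<tau>(2)[of n] by (simp add: abs_divide divide_le_eq)
      then have "\<bar>(f (x + \<tau> n *\<^sub>R e) - f x) / \<tau> n\<bar> * \<bar>g x\<bar> \<le> L * norm e * \<bar>g x\<bar>"
        by (rule mult_right_mono) simp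
      then show "norm ((f (x + \<tau> n *\<^sub>R e) - f x) / \<tau> n * g x) \<le> L * norm e * \<bar>g x\<bar>"
        by (simp only: real_norm_def abs_mult)
    qed
  qed (use g in auto)
qed

lemma integral_shift_mult_test_fun:
  fixes f h :: "real ^ 'n::finite \<Rightarrow> real"
  assumes "test_fun f" "test_fun h"
  shows "integral\<^sup>L lborel (\<lambda>x. f (x + c) * h x) = integral\<^sup>L lborel (\<lambda>x. f x * h (x - c))"
proof -
  note [measurable] = test_fun_borel_measurable[OF assms(1)] test_fun_borel_measurable[OF assms(2)]
  have "integral\<^sup>L lborel (\<lambda>x. f x * h (x - c)) = integral\<^sup>L lborel (\<lambda>x. f (c + x) * h (c + x - c))"
    by (rule integral_lborel_translate[symmetric]) measurable
  then show ?thesis by (simp add: add.commute)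
qed

lemma test_fun_integration_by_parts:
  assumes f: "test_fun f" and h: "test_fun h"
  shows "integral\<^sup>L lborel (\<lambda>x. partial_deriv i f x * h x) =
    - integral\<^sup>L lborel (\<lambda>x. f x * partial_deriv i h x)"
proof -
  define e :: "real ^ 'a" where "e = axis i 1"
  define \<tau> :: "nat \<Rightarrow> real" where "\<tau> n = inverse (real (Suc n))" for n
  have \<tau>: "\<tau> \<longlonglongrightarrow> 0" "\<And>n. \<tau> n \<noteq> 0"
    unfolding \<tau>_def by (rule LIMSEQ_inverse_real_of_nat) simp
  have "(\<lambda>n. - \<tau> n) \<longlonglongrightarrow> 0" using tendsto_minus[OF \<tau>(1)] by simp
  have shifted: "continuous_on UNIV (\<lambda>x. g (x + c))" if "test_fun g" for g and c :: "real ^ 'a"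
    by (rule continuous_on_compose2[OF test_fun_continuous[OF that]]) (auto intro!: continuous_intros)
  have int: "integrable lborel (\<lambda>x. f (x + c) * h x)" "integrable lborel (\<lambda>x. f x * h (x + c))" for c
    using test_fun_mult_integrable[OF h shifted[OF f]] test_fun_mult_integrable[OF f shifted[OF h]]
    by (auto simp: mult.commute)
  \<comment> \<open>the same integral of difference quotients, with the shift moved from \<open>f\<close> to \<open>h\<close>\<close>
  have shift: "integral\<^sup>L lborel (\<lambda>x. (f (x + \<tau> n *\<^sub>R e) - f x) / \<tau> n * h x) =
      - integral\<^sup>L lborel (\<lambda>x. (h (x + (- \<tau> n) *\<^sub>R e) - h x) / (- \<tau> n) * f x)" for n
  proof -
    have "integral\<^sup>L lborel (\<lambda>x. (f (x + \<tau> n *\<^sub>R e) - f x) / \<tau> n * h x) =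
        (integral\<^sup>L lborel (\<lambda>x. f (x + \<tau> n *\<^sub>R e) * h x) - integral\<^sup>L lborel (\<lambda>x. f x * h x)) / \<tau> n"
      using int[of "\<tau> n *\<^sub>R e"] int[of 0] by (simp add: left_diff_distrib)
    also have "\<dots> = (integral\<^sup>L lborel (\<lambda>x. f x * h (x + (- \<tau> n) *\<^sub>R e)) -
        integral\<^sup>L lborel (\<lambda>x. f x * h x)) / \<tau> n"
      by (simp add: integral_shift_mult_test_fun[OF f h])
    also have "\<dots> = - integral\<^sup>L lborel (\<lambda>x. (h (x + (- \<tau> n) *\<^sub>R e) - h x) / (- \<tau> n) * f x)"
      using int[of "(- \<tau> n) *\<^sub>R e"] int[of 0] by (simp add: right_diff_distrib mult.commute)
    finally show ?thesis .
  qed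
  have "(\<lambda>n. integral\<^sup>L lborel (\<lambda>x. (h (x + (- \<tau> n) *\<^sub>R e) - h x) / (- \<tau> n) * f x))
      \<longlonglongrightarrow> integral\<^sup>L lborel (\<lambda>x. partial_deriv i h x * f x)"
    unfolding partial_deriv_def e_def
    by (intro integral_difference_quotient_tendsto h test_fun_integrable f
        \<open>(\<lambda>n. - \<tau> n) \<longlonglongrightarrow> 0\<close>) (simp add: \<tau>(2))
  then have "(\<lambda>n. integral\<^sup>L lborel (\<lambda>x. (f (x + \<tau> n *\<^sub>R e) - f x) / \<tau> n * h x))
      \<longlonglongrightarrow> - integral\<^sup>L lborel (\<lambda>x. partial_deriv i h x * f x)"
    unfolding shift by (rule tendsto_minus)
  moreover have "(\<lambda>n. integral\<^sup>L lborel (\<lambda>x. (f (x + \<tau> n *\<^sub>R e) - f x) / \<tau> n * h x))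
      \<longlonglongrightarrow> integral\<^sup>L lborel (\<lambda>x. partial_deriv i f x * h x)"
    unfolding partial_deriv_def e_def
    by (intro integral_difference_quotient_tendsto f test_fun_integrable h \<tau>)
  ultimately have "- integral\<^sup>L lborel (\<lambda>x. partial_deriv i h x * f x) =
      integral\<^sup>L lborel (\<lambda>x. partial_deriv i f x * h x)"
    by (rule LIMSEQ_unique)
  then show ?thesis by (simp add: mult.commute)
qed

lemma le_eps_plus_powr:
  fixes a e q :: real
  assumes "a \<ge> 0" "e > 0" "q \<ge> 1"
  shows "a \<le> e + e powr (1 - q) * a powr q"
proof (cases "a \<le> e")
  case True then show ?thesis by (simp add: add_increasing2)
next
  case False
  then have "a / e \<le> (a / e) powr q"
    using assms powr_mono[of 1 q "a / e"] by simp
  then have "a \<le> e * (a powr q / e powr q)"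
    using assms False by (simp add: powr_divide field_simps)
  also have "\<dots> = e powr (1 - q) * a powr q"
    using assms by (simp add: powr_diff field_simps)
  finally show ?thesis using assms(2) by linarith
qed

text \<open>No Hoelder inequality is needed: \<open>le_eps_plus_powr\<close> bounds \<open>\<bar>\<eta>\<bar>\<close> by \<open>e\<close> on the support
  of \<open>g\<close> plus a multiple of \<open>\<bar>\<eta>\<bar>\<^sup>q\<close>.\<close>
lemma abs_integral_mult_test_fun_le:
  fixes \<eta> g :: "real ^ 'n::finite \<Rightarrow> real"
  assumes \<eta>: "test_fun \<eta>" and g: "test_fun g" "\<And>x. \<bar>g x\<bar> \<le> M" "\<And>x. R < norm x \<Longrightarrow> g x = 0"
    and "e > 0" "q \<ge> 1"
  shows "\<bar>integral\<^sup>L lborel (\<lambda>x. \<eta> x * g x)\<bar> \<le> M * e * measure lborel (cball (0 :: real ^ 'n) R) +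
    M * e powr (1 - q) * integral\<^sup>L lborel (\<lambda>x. \<bar>\<eta> x\<bar> powr q)"
proof -
  define C where "C = cball (0::real ^ 'n) R"
  have M: "M \<ge> 0" using g(2)[of 0] by linarith
  have C: "emeasure lborel C < \<infinity>" unfolding C_def by (rule emeasure_lborel_cball_finite)
  have \<eta>_int: "integrable lborel (\<lambda>x. \<bar>\<eta> x\<bar> powr q)" using test_fun_Lp_pow(1)[OF \<eta>] assms(6) by simp
  have int: "integrable lborel (\<lambda>x. M * e * indicator C x + M * e powr (1 - q) * \<bar>\<eta> x\<bar> powr q)"
    using C \<eta>_int by (auto simp: C_def)
  have "\<bar>integral\<^sup>L lborel (\<lambda>x. \<eta> x * g x)\<bar> \<le> integral\<^sup>L lborel (\<lambda>x. norm (\<eta> x * g x))"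
    using integral_norm_bound[of lborel "\<lambda>x. \<eta> x * g x"] by simp
  also have "\<dots> \<le> integral\<^sup>L lborel (\<lambda>x. M * e * indicator C x + M * e powr (1 - q) * \<bar>\<eta> x\<bar> powr q)"
  proof (rule integral_mono[OF _ int])
    show "integrable lborel (\<lambda>x. norm (\<eta> x * g x))"
      using test_fun_mult_integrable[OF \<eta> test_fun_continuous[OF g(1)]] by auto
    show "norm (\<eta> x * g x) \<le> M * e * indicator C x + M * e powr (1 - q) * \<bar>\<eta> x\<bar> powr q" for x
    proof (cases "x \<in> C")
      case True
      have "norm (\<eta> x * g x) \<le> (e + e powr (1 - q) * \<bar>\<eta> x\<bar> powr q) * M"
        unfolding real_norm_def abs_mult by (intro mult_mono le_eps_plus_powr g(2)) (use assms in auto)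
      then show ?thesis using True by (simp add: algebra_simps)
    next
      case False
      then show ?thesis using g(3) M \<open>e > 0\<close> by (simp add: C_def)
    qed
  qed
  also have "\<dots> = M * e * measure lborel C + M * e powr (1 - q) * integral\<^sup>L lborel (\<lambda>x. \<bar>\<eta> x\<bar> powr q)"
    using C \<eta>_int by (simp add: C_def)
  finally show ?thesis unfolding C_def .
qed

lemma Lp_pow_tendsto_zero_imp_integral_mult_tendsto_zero:
  assumes \<eta>: "\<And>m. test_fun (\<eta> m)" and g: "test_fun g" and q: "q \<ge> 1"
    and lim: "(\<lambda>m. Lp_pow q (\<eta> m)) \<longlonglongrightarrow> 0"
  shows "(\<lambda>m. integral\<^sup>L lborel (\<lambda>x. \<eta> m x * g x)) \<longlonglongrightarrow> 0"
proof (rule LIMSEQ_I)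
  fix r :: real assume r: "r > 0"
  obtain R where R: "\<And>x. R < norm x \<Longrightarrow> g x = 0" using test_fun_vanishing[OF g] by blast
  obtain M where M: "M \<ge> 0" "\<And>x. \<bar>g x\<bar> \<le> M" using test_fun_bounded[OF g] by blast
  define \<mu> where "\<mu> = measure lborel (cball (0::real ^ 'a) R)"
  define A where "A m = integral\<^sup>L lborel (\<lambda>x. \<bar>\<eta> m x\<bar> powr q)" for m
  have "(\<lambda>m. ennreal (A m)) \<longlonglongrightarrow> ennreal 0"
    using lim test_fun_Lp_pow(2)[OF \<eta>] q unfolding A_def by simp
  then have A: "A \<longlonglongrightarrow> 0"
    by (subst (asm) tendsto_ennreal_iff) (auto simp: A_def intro!: integral_nonneg_AE)
  define K where "K = M * \<mu> + 1"
  define e where "e = r / (2 * K)"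
  have K: "K > 0" unfolding K_def \<mu>_def using M by (simp add: add_nonneg_pos)
  have e: "e > 0" unfolding e_def using r K by simp
  have "M * e * \<mu> < K * e" using e unfolding K_def by (simp add: algebra_simps)
  also have "\<dots> = r / 2" unfolding e_def using K by simp
  finally have small: "M * e * \<mu> < r / 2" .
  have "(\<lambda>m. M * e powr (1 - q) * A m) \<longlonglongrightarrow> 0" by (rule tendsto_mult_right_zero[OF A])
  then obtain m0 where m0: "\<And>m. m \<ge> m0 \<Longrightarrow> \<bar>M * e powr (1 - q) * A m\<bar> < r / 2"
    using LIMSEQ_D[of _ 0 "r / 2"] r by fastforce
  show "\<exists>m0. \<forall>m\<ge>m0. norm (integral\<^sup>L lborel (\<lambda>x. \<eta> m x * g x) - 0) < r"
  proof (intro exI allI impI)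
    fix m assume "m \<ge> m0"
    have "\<bar>integral\<^sup>L lborel (\<lambda>x. \<eta> m x * g x)\<bar> \<le> M * e * \<mu> + M * e powr (1 - q) * A m"
      unfolding \<mu>_def A_def by (rule abs_integral_mult_test_fun_le) (use \<eta> g M R e q in auto)
    moreover have "M * e powr (1 - q) * A m < r / 2" using m0[OF \<open>m \<ge> m0\<close>] by linarith
    ultimately show "norm (integral\<^sup>L lborel (\<lambda>x. \<eta> m x * g x) - 0) < r" using small by simp
  qed
qed

text \<open>Closability of the gradient form. Integration by parts moves the derivatives of \<open>\<eta> m\<close>
  onto \<open>\<eta> k\<close>, so \<open>dirichlet_form (\<eta> k) (\<eta> m) \<rightarrow> 0\<close> as \<open>m \<rightarrow> \<infinity>\<close>; then expand
  \<open>D12sq_test (\<eta> k - \<eta> m)\<close>.\<close>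
lemma D12sq_test_tendsto_zero:
  assumes \<eta>: "\<And>k. test_fun (\<eta> k)" and q: "q \<ge> 1"
    and Cauchy: "\<And>e. e > 0 \<Longrightarrow> \<exists>K. \<forall>k\<ge>K. \<forall>m\<ge>K. D12sq_test (\<lambda>x. \<eta> k x - \<eta> m x) < e"
    and lim: "(\<lambda>m. Lp_pow q (\<eta> m)) \<longlonglongrightarrow> 0"
  shows "(\<lambda>k. D12sq_test (\<eta> k)) \<longlonglongrightarrow> 0"
proof -
  have weak: "(\<lambda>m. dirichlet_form (\<eta> k) (\<eta> m)) \<longlonglongrightarrow> 0" for k
  proof -
    have "integral\<^sup>L lborel (\<lambda>x. partial_deriv i (\<eta> k) x * partial_deriv i (\<eta> m) x) =
        - integral\<^sup>L lborel (\<lambda>x. \<eta> m x * partial_deriv i (partial_deriv i (\<eta> k)) x)" for i m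
      using test_fun_integration_by_parts[OF \<eta>[of m] test_fun_partial_deriv[OF \<eta>[of k]], of i]
      by (simp add: mult.commute)
    then have "dirichlet_form (\<eta> k) (\<eta> m) =
        (\<Sum>i\<in>UNIV. - integral\<^sup>L lborel (\<lambda>x. \<eta> m x * partial_deriv i (partial_deriv i (\<eta> k)) x))" for m
      unfolding dirichlet_form_def by simp
    moreover have "(\<lambda>m. \<Sum>i\<in>UNIV. - integral\<^sup>L lborel (\<lambda>x. \<eta> m x * partial_deriv i (partial_deriv i (\<eta> k)) x))
        \<longlonglongrightarrow> (\<Sum>i\<in>(UNIV :: 'a set). - 0)"
      by (intro tendsto_sum tendsto_minus
          Lp_pow_tendsto_zero_imp_integral_mult_tendsto_zero[OF \<eta> _ q lim] test_fun_partial_deriv \<eta>)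
    ultimately show ?thesis by simp
  qed
  show ?thesis
  proof (rule LIMSEQ_I)
    fix r :: real assume r: "r > 0"
    obtain K where K: "\<And>k m. k \<ge> K \<Longrightarrow> m \<ge> K \<Longrightarrow> D12sq_test (\<lambda>x. \<eta> k x - \<eta> m x) < r / 2"
      using Cauchy[of "r / 2"] r by auto
    have le_half: "D12sq_test (\<eta> k) \<le> r / 2" if k: "k \<ge> K" for k
    proof -
      have lim: "(\<lambda>m. r / 2 + 2 * dirichlet_form (\<eta> k) (\<eta> m)) \<longlonglongrightarrow> r / 2"
        using tendsto_add[OF tendsto_const tendsto_mult_right_zero[OF weak]] by simp
      have le: "D12sq_test (\<eta> k) \<le> r / 2 + 2 * dirichlet_form (\<eta> k) (\<eta> m)" if "m \<ge> K" for m
        using K[OF k that] D12sq_test_lincomb[OF \<eta>[of k] \<eta>[of m], of 1 "-1"]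
          D12sq_test_nonneg[of "\<eta> m"]
        by simp
      show ?thesis by (rule LIMSEQ_le_const[OF lim]) (use le in blast)
    qed
    then show "\<exists>K. \<forall>k\<ge>K. norm (D12sq_test (\<eta> k) - 0) < r"
    proof (intro exI allI impI)
      fix k assume "k \<ge> K"
      then show "norm (D12sq_test (\<eta> k) - 0) < r"
        using le_half[of k] D12sq_test_nonneg[of "\<eta> k"] r by simp
    qed
  qed
qed

lemma Gag_nonneg: "Gag s f \<ge> 0"
  by (simp add: Gag_def)

lemma approx_seqD:
  fixes \<phi> :: "nat \<Rightarrow> real ^ 'n::finite \<Rightarrow> real"
  assumes "approx_seq s w \<phi>"
  shows "test_fun (\<phi> k)"
    and "e > 0 \<Longrightarrow> \<exists>K. \<forall>k\<ge>K. \<forall>m\<ge>K. D12sq_test (\<lambda>x. \<phi> k x - \<phi> m x) < e"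
    and "(\<lambda>k. Lp_pow (critS CARD('n)) (\<lambda>x. \<phi> k x - w x)) \<longlonglongrightarrow> 0"
proof -
  show "test_fun (\<phi> k)" "(\<lambda>k. Lp_pow (critS CARD('n)) (\<lambda>x. \<phi> k x - w x)) \<longlonglongrightarrow> 0"
    using assms unfolding approx_seq_def by auto
  have "\<forall>e>0. \<exists>K. \<forall>k\<ge>K. \<forall>m\<ge>K.
      D12sq_test (\<lambda>x. \<phi> k x - \<phi> m x) + Gag s (\<lambda>x. \<phi> k x - \<phi> m x) < e"
    using assms unfolding approx_seq_def by (elim conjE)
  moreover assume "e > 0"
  ultimately obtain K where K: "\<forall>k\<ge>K. \<forall>m\<ge>K.
      D12sq_test (\<lambda>x. \<phi> k x - \<phi> m x) + Gag s (\<lambda>x. \<phi> k x - \<phi> m x) < e"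
    by blast
  show "\<exists>K. \<forall>k\<ge>K. \<forall>m\<ge>K. D12sq_test (\<lambda>x. \<phi> k x - \<phi> m x) < e"
  proof (intro exI allI impI)
    fix k m assume "k \<ge> K" "m \<ge> K"
    then have "D12sq_test (\<lambda>x. \<phi> k x - \<phi> m x) + Gag s (\<lambda>x. \<phi> k x - \<phi> m x) < e"
      using K by blast
    then show "D12sq_test (\<lambda>x. \<phi> k x - \<phi> m x) < e"
      using Gag_nonneg[of s "\<lambda>x. \<phi> k x - \<phi> m x"] by linarith
  qed
qed

lemma approx_seq_D12sq_test_convergent:
  assumes "approx_seq s w \<phi>"
  shows "convergent (\<lambda>k. D12sq_test (\<phi> k))"
proof -
  note test = approx_seqD(1)[OF assms]
  have "Cauchy (\<lambda>k. sqrt (D12sq_test (\<phi> k)))"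
  proof (rule CauchyI)
    fix e :: real assume e: "e > 0"
    then obtain K where K: "\<forall>k\<ge>K. \<forall>m\<ge>K. D12sq_test (\<lambda>x. \<phi> k x - \<phi> m x) < e\<^sup>2"
      using approx_seqD(2)[OF assms, of "e\<^sup>2"] by auto
    show "\<exists>K. \<forall>k\<ge>K. \<forall>m\<ge>K. norm (sqrt (D12sq_test (\<phi> k)) - sqrt (D12sq_test (\<phi> m))) < e"
    proof (intro exI allI impI)
      fix k m assume "k \<ge> K" "m \<ge> K"
      then have "D12sq_test (\<lambda>x. \<phi> k x - \<phi> m x) < e\<^sup>2" using K by simp
      then have "sqrt (D12sq_test (\<lambda>x. \<phi> k x - \<phi> m x)) < sqrt (e\<^sup>2)"
        by (rule real_sqrt_less_mono)
      then have "sqrt (D12sq_test (\<lambda>x. \<phi> k x - \<phi> m x)) < e"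
        using e by simp
      then show "norm (sqrt (D12sq_test (\<phi> k)) - sqrt (D12sq_test (\<phi> m))) < e"
        using sqrt_D12sq_test_diff_le[OF test test, of k m] by simp
    qed
  qed
  then obtain L where "(\<lambda>k. sqrt (D12sq_test (\<phi> k))) \<longlonglongrightarrow> L"
    by (auto simp: Cauchy_convergent_iff convergent_def)
  then have "(\<lambda>k. (sqrt (D12sq_test (\<phi> k)))\<^sup>2) \<longlonglongrightarrow> L\<^sup>2" by (rule tendsto_power)
  then show ?thesis unfolding convergent_def by (auto simp: D12sq_test_nonneg)
qed

lemma abs_diff_powr_le:
  fixes a b q :: real
  assumes "q \<ge> 0"
  shows "\<bar>a - b\<bar> powr q \<le> 2 powr q * (\<bar>a\<bar> powr q + \<bar>b\<bar> powr q)"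
proof -
  have "\<bar>a - b\<bar> powr q \<le> (2 * max \<bar>a\<bar> \<bar>b\<bar>) powr q" using assms by (intro powr_mono2) auto
  also have "\<dots> = 2 powr q * max \<bar>a\<bar> \<bar>b\<bar> powr q" by (simp add: powr_mult)
  also have "max \<bar>a\<bar> \<bar>b\<bar> powr q \<le> \<bar>a\<bar> powr q + \<bar>b\<bar> powr q" by (simp add: max_def)
  finally show ?thesis by (simp add: mult_left_mono)
qed

lemma Lp_pow_diff_le:
  fixes f g w :: "real ^ 'n::finite \<Rightarrow> real"
  assumes [measurable]: "f \<in> borel_measurable lborel" "g \<in> borel_measurable lborel"
    "w \<in> borel_measurable lborel" and q: "q \<ge> 0"
  shows "Lp_pow q (\<lambda>x. f x - g x) \<le>
    ennreal (2 powr q) * (Lp_pow q (\<lambda>x. f x - w x) + Lp_pow q (\<lambda>x. g x - w x))"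
proof -
  have "ennreal (\<bar>f x - g x\<bar> powr q) \<le>
      ennreal (2 powr q * (\<bar>f x - w x\<bar> powr q + \<bar>g x - w x\<bar> powr q))" for x
    using abs_diff_powr_le[OF q, of "f x - w x" "g x - w x"] by (intro ennreal_leI) simp
  also have "ennreal (2 powr q * (\<bar>f x - w x\<bar> powr q + \<bar>g x - w x\<bar> powr q)) =
      ennreal (2 powr q) * (ennreal (\<bar>f x - w x\<bar> powr q) + ennreal (\<bar>g x - w x\<bar> powr q))" for x
    by (simp add: ennreal_mult ennreal_plus)
  finally have "ennreal (\<bar>f x - g x\<bar> powr q) \<le>
      ennreal (2 powr q) * (ennreal (\<bar>f x - w x\<bar> powr q) + ennreal (\<bar>g x - w x\<bar> powr q))" for x .
  then have "Lp_pow q (\<lambda>x. f x - g x) \<le> (\<integral>\<^sup>+ x. ennreal (2 powr q) *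
      (ennreal (\<bar>f x - w x\<bar> powr q) + ennreal (\<bar>g x - w x\<bar> powr q)) \<partial>lborel)"
    unfolding Lp_pow_def by (rule nn_integral_mono)
  also have "\<dots> = ennreal (2 powr q) * (Lp_pow q (\<lambda>x. f x - w x) + Lp_pow q (\<lambda>x. g x - w x))"
    unfolding Lp_pow_def by (simp add: nn_integral_cmult nn_integral_add)
  finally show ?thesis .
qed

lemma approx_seq_diff_Cauchy:
  assumes \<phi>: "approx_seq s w \<phi>" and \<psi>: "approx_seq s w' \<psi>" and "e > 0"
  shows "\<exists>K. \<forall>k\<ge>K. \<forall>m\<ge>K. D12sq_test (\<lambda>x. (\<phi> k x - \<psi> k x) - (\<phi> m x - \<psi> m x)) < e"
proof -
  note t\<phi> = approx_seqD(1)[OF \<phi>] and t\<psi> = approx_seqD(1)[OF \<psi>]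
  obtain K1 where K1: "\<forall>k\<ge>K1. \<forall>m\<ge>K1. D12sq_test (\<lambda>x. \<phi> k x - \<phi> m x) < e / 4"
    using approx_seqD(2)[OF \<phi>, of "e / 4"] \<open>e > 0\<close> by auto
  obtain K2 where K2: "\<forall>k\<ge>K2. \<forall>m\<ge>K2. D12sq_test (\<lambda>x. \<psi> k x - \<psi> m x) < e / 4"
    using approx_seqD(2)[OF \<psi>, of "e / 4"] \<open>e > 0\<close> by auto
  have "D12sq_test (\<lambda>x. (\<phi> k x - \<psi> k x) - (\<phi> m x - \<psi> m x)) < e"
    if "k \<ge> max K1 K2" "m \<ge> max K1 K2" for k m
  proof -
    have eq: "(\<lambda>x. (\<phi> k x - \<psi> k x) - (\<phi> m x - \<psi> m x)) =
        (\<lambda>x. 1 * (\<phi> k x - \<phi> m x) + (- 1) * (\<psi> k x - \<psi> m x))"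
      by (simp add: fun_eq_iff)
    have "D12sq_test (\<lambda>x. 1 * (\<phi> k x - \<phi> m x) + (- 1) * (\<psi> k x - \<psi> m x)) \<le>
        2 * 1\<^sup>2 * D12sq_test (\<lambda>x. \<phi> k x - \<phi> m x) + 2 * (- 1)\<^sup>2 * D12sq_test (\<lambda>x. \<psi> k x - \<psi> m x)"
      by (intro D12sq_test_lincomb_le test_fun_diff t\<phi> t\<psi>)
    moreover have "D12sq_test (\<lambda>x. \<phi> k x - \<phi> m x) < e / 4" "D12sq_test (\<lambda>x. \<psi> k x - \<psi> m x) < e / 4"
      using K1 K2 that by simp_all
    ultimately show ?thesis unfolding eq[symmetric] by simp
  qed
  then show ?thesis by blast
qed

lemma approx_seq_diff_Lp_pow_tendsto_zero:
  fixes w :: "real ^ 'n::finite \<Rightarrow> real"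
  assumes \<phi>: "approx_seq s w \<phi>" and \<psi>: "approx_seq s w \<psi>"
    and w: "w \<in> borel_measurable lborel" and q: "critS CARD('n) \<ge> 0"
  shows "(\<lambda>k. Lp_pow (critS CARD('n)) (\<lambda>x. \<phi> k x - \<psi> k x)) \<longlonglongrightarrow> 0"
proof -
  define B where "B k = ennreal (2 powr critS CARD('n)) *
    (Lp_pow (critS CARD('n)) (\<lambda>x. \<phi> k x - w x) + Lp_pow (critS CARD('n)) (\<lambda>x. \<psi> k x - w x))" for k
  have "B \<longlonglongrightarrow> ennreal (2 powr critS CARD('n)) * (0 + 0)"
    unfolding B_def
    by (intro ennreal_tendsto_cmult tendsto_add approx_seqD(3)[OF \<phi>] approx_seqD(3)[OF \<psi>]) simp
  then have B: "B \<longlonglongrightarrow> 0" by simp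
  show ?thesis
  proof (rule tendsto_sandwich[OF _ _ tendsto_const B])
    have "\<phi> k \<in> borel_measurable lborel" "\<psi> k \<in> borel_measurable lborel" for k
      using test_fun_borel_measurable[OF approx_seqD(1)[OF \<phi>]]
        test_fun_borel_measurable[OF approx_seqD(1)[OF \<psi>]] by auto
    then have "Lp_pow (critS CARD('n)) (\<lambda>x. \<phi> k x - \<psi> k x) \<le> B k" for k
      unfolding B_def using q w by (intro Lp_pow_diff_le) simp_all
    then show "\<forall>\<^sub>F k in sequentially. Lp_pow (critS CARD('n)) (\<lambda>x. \<phi> k x - \<psi> k x) \<le> B k" by simp
  qed simp
qed

text \<open>The difference of two approximating sequences is \<open>D\<^sup>1\<^sup>,\<^sup>2\<close>-Cauchy and tends to zero in
  \<open>L\<^sup>2\<^sup>*\<close>, so closability applies to it.\<close>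
lemma approx_seq_D12sq_test_lim_unique:
  fixes w :: "real ^ 'n::finite \<Rightarrow> real"
  assumes \<phi>: "approx_seq s w \<phi>" and \<psi>: "approx_seq s w \<psi>"
    and w: "w \<in> borel_measurable lborel" and q: "critS CARD('n) \<ge> 1"
  shows "lim (\<lambda>k. D12sq_test (\<phi> k)) = lim (\<lambda>k. D12sq_test (\<psi> k))"
proof -
  note t\<phi> = approx_seqD(1)[OF \<phi>] and t\<psi> = approx_seqD(1)[OF \<psi>]
  define \<eta> where "\<eta> k x = \<phi> k x - \<psi> k x" for k x
  have "(\<lambda>k. D12sq_test (\<eta> k)) \<longlonglongrightarrow> 0"
  proof (rule D12sq_test_tendsto_zero[where \<eta>=\<eta>, OF _ q])
    show "test_fun (\<eta> k)" for k unfolding \<eta>_def by (intro test_fun_diff t\<phi> t\<psi>)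
    show "\<exists>K. \<forall>k\<ge>K. \<forall>m\<ge>K. D12sq_test (\<lambda>x. \<eta> k x - \<eta> m x) < e" if "e > 0" for e
      unfolding \<eta>_def by (rule approx_seq_diff_Cauchy[OF \<phi> \<psi> that])
    show "(\<lambda>k. Lp_pow (critS CARD('n)) (\<eta> k)) \<longlonglongrightarrow> 0"
      unfolding \<eta>_def using q by (intro approx_seq_diff_Lp_pow_tendsto_zero[OF \<phi> \<psi> w]) simp
  qed
  then have "(\<lambda>k. sqrt (D12sq_test (\<eta> k))) \<longlonglongrightarrow> sqrt 0"
    by (rule tendsto_real_sqrt)
  then have sqrt_\<eta>: "(\<lambda>k. sqrt (D12sq_test (\<eta> k))) \<longlonglongrightarrow> 0"
    by simp
  have "norm (sqrt (D12sq_test (\<phi> k)) - sqrt (D12sq_test (\<psi> k))) \<le> sqrt (D12sq_test (\<eta> k))" for k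
    unfolding \<eta>_def real_norm_def by (rule sqrt_D12sq_test_diff_le[OF t\<phi> t\<psi>])
  then have "(\<lambda>k. sqrt (D12sq_test (\<phi> k)) - sqrt (D12sq_test (\<psi> k))) \<longlonglongrightarrow> 0"
    by (intro Lim_null_comparison[OF always_eventually sqrt_\<eta>]) blast
  moreover have "(\<lambda>k. sqrt (D12sq_test (\<phi> k)) - sqrt (D12sq_test (\<psi> k))) \<longlonglongrightarrow>
      sqrt (lim (\<lambda>k. D12sq_test (\<phi> k))) - sqrt (lim (\<lambda>k. D12sq_test (\<psi> k)))"
    using approx_seq_D12sq_test_convergent[OF \<phi>] approx_seq_D12sq_test_convergent[OF \<psi>]
    by (intro tendsto_diff tendsto_real_sqrt) (simp_all add: convergent_LIMSEQ_iff)
  ultimately have "sqrt (lim (\<lambda>k. D12sq_test (\<phi> k))) - sqrt (lim (\<lambda>k. D12sq_test (\<psi> k))) = 0"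
    by (rule LIMSEQ_unique[rotated])
  then show ?thesis by simp
qed

lemma Lp_pow_cmult:
  assumes [measurable]: "f \<in> borel_measurable lborel"
  shows "Lp_pow q (\<lambda>x. c * f x) = ennreal (\<bar>c\<bar> powr q) * Lp_pow q f"
  unfolding Lp_pow_def
  by (simp add: abs_mult powr_mult ennreal_mult nn_integral_cmult)

lemma Gag_enn_cmult:
  fixes f :: "real ^ 'n::finite \<Rightarrow> real"
  assumes [measurable]: "f \<in> borel_measurable lborel"
  shows "Gag_enn s (\<lambda>x. c * f x) = ennreal (c\<^sup>2) * Gag_enn s f"
proof -
  have "(c * f x - c * f y)\<^sup>2 / norm (x - y) powr (real CARD('n) + 2 * s) =
      c\<^sup>2 * ((f x - f y)\<^sup>2 / norm (x - y) powr (real CARD('n) + 2 * s))" for x y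
    by (simp add: power2_eq_square algebra_simps)
  then have "ennreal ((c * f x - c * f y)\<^sup>2 / norm (x - y) powr (real CARD('n) + 2 * s)) =
      ennreal (c\<^sup>2) * ennreal ((f x - f y)\<^sup>2 / norm (x - y) powr (real CARD('n) + 2 * s))" for x y
    by (simp only:) (rule ennreal_mult; simp)
  then show ?thesis
    unfolding Gag_enn_def by (simp add: nn_integral_cmult)
qed

lemma Gag_cmult:
  fixes f :: "real ^ 'n::finite \<Rightarrow> real"
  assumes "f \<in> borel_measurable lborel"
  shows "Gag s (\<lambda>x. c * f x) = c\<^sup>2 * Gag s f"
  unfolding Gag_def Gag_enn_cmult[OF assms] by (simp add: enn2real_mult)

lemma D12sq_test_plus_Gag_cmult:
  assumes "test_fun f"
  shows "D12sq_test (\<lambda>x. c * f x) + Gag s (\<lambda>x. c * f x) = c\<^sup>2 * (D12sq_test f + Gag s f)"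
proof -
  have "f \<in> borel_measurable lborel" using test_fun_borel_measurable[OF assms] by simp
  then show ?thesis using D12sq_test_cmult[OF assms] Gag_cmult by (simp add: algebra_simps)
qed

lemma approx_seq_cmult:
  fixes w :: "real ^ 'n::finite \<Rightarrow> real"
  assumes \<phi>: "approx_seq s w \<phi>" and [measurable]: "w \<in> borel_measurable lborel"
  shows "approx_seq s (\<lambda>x. c * w x) (\<lambda>k x. c * \<phi> k x)"
proof -
  note t = approx_seqD(1)[OF \<phi>]
  have [measurable]: "\<phi> k \<in> borel_measurable lborel" for k
    using test_fun_borel_measurable[OF t] by simp
  have Cauchy: "\<exists>K. \<forall>k\<ge>K. \<forall>m\<ge>K.
      D12sq_test (\<lambda>x. c * \<phi> k x - c * \<phi> m x) + Gag s (\<lambda>x. c * \<phi> k x - c * \<phi> m x) < e"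
    if "e > 0" for e
  proof -
    from that have "e / (c\<^sup>2 + 1) > 0" by (intro divide_pos_pos) (simp_all add: add_nonneg_pos)
    then obtain K where K: "\<forall>k\<ge>K. \<forall>m\<ge>K.
        D12sq_test (\<lambda>x. \<phi> k x - \<phi> m x) + Gag s (\<lambda>x. \<phi> k x - \<phi> m x) < e / (c\<^sup>2 + 1)"
      using \<phi> unfolding approx_seq_def by blast
    have "D12sq_test (\<lambda>x. c * \<phi> k x - c * \<phi> m x) + Gag s (\<lambda>x. c * \<phi> k x - c * \<phi> m x) < e"
      if "k \<ge> K" "m \<ge> K" for k m
    proof -
      let ?E = "D12sq_test (\<lambda>x. \<phi> k x - \<phi> m x) + Gag s (\<lambda>x. \<phi> k x - \<phi> m x)"
      have "(\<lambda>x. c * \<phi> k x - c * \<phi> m x) = (\<lambda>x. c * (\<phi> k x - \<phi> m x))"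
        by (simp add: right_diff_distrib)
      then have "D12sq_test (\<lambda>x. c * \<phi> k x - c * \<phi> m x) + Gag s (\<lambda>x. c * \<phi> k x - c * \<phi> m x) =
          c\<^sup>2 * ?E"
        using D12sq_test_plus_Gag_cmult[OF test_fun_diff[OF t t]] by simp
      also have "\<dots> \<le> (c\<^sup>2 + 1) * ?E"
        using D12sq_test_nonneg[of "\<lambda>x. \<phi> k x - \<phi> m x"] Gag_nonneg[of s "\<lambda>x. \<phi> k x - \<phi> m x"]
        by (intro mult_right_mono) auto
      also have "\<dots> < e"
      proof -
        have "?E < e / (c\<^sup>2 + 1)" using K that by blast
        moreover have "c\<^sup>2 + 1 > 0" by (simp add: add_nonneg_pos)
        ultimately show ?thesis by (simp add: pos_less_divide_eq mult.commute)
      qed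
      finally show ?thesis .
    qed
    then show ?thesis by blast
  qed
  have "Lp_pow (critS CARD('n)) (\<lambda>x. c * \<phi> k x - c * w x) =
      ennreal (\<bar>c\<bar> powr critS CARD('n)) * Lp_pow (critS CARD('n)) (\<lambda>x. \<phi> k x - w x)" for k
  proof -
    have "(\<lambda>x. c * \<phi> k x - c * w x) = (\<lambda>x. c * (\<phi> k x - w x))" by (simp add: right_diff_distrib)
    then show ?thesis by (simp add: Lp_pow_cmult)
  qed
  then have "(\<lambda>k. Lp_pow (critS CARD('n)) (\<lambda>x. c * \<phi> k x - c * w x)) \<longlonglongrightarrow> 0"
    using ennreal_tendsto_cmult[OF _ approx_seqD(3)[OF \<phi>], of "\<bar>c\<bar> powr critS CARD('n)"] by simp
  then show ?thesis
    unfolding approx_seq_def using test_fun_cmult[OF t] Cauchy by blast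
qed

lemma approx_seq_some:
  assumes "w \<in> Espace s"
  shows "approx_seq s w (SOME \<phi>. approx_seq s w \<phi>)"
proof -
  obtain \<phi> where "approx_seq s w \<phi>" using assms unfolding Espace_def by auto
  then show ?thesis by (rule someI[where P="approx_seq s w"])
qed

lemma D12sq_nonneg:
  assumes "w \<in> Espace s"
  shows "D12sq s w \<ge> 0"
proof -
  have "convergent (\<lambda>k. D12sq_test ((SOME \<phi>. approx_seq s w \<phi>) k))"
    by (rule approx_seq_D12sq_test_convergent[OF approx_seq_some[OF assms]])
  then show ?thesis
    unfolding D12sq_def convergent_LIMSEQ_iff by (rule LIMSEQ_le_const) (simp add: D12sq_test_nonneg)
qed

lemma D12sq_cmult:
  fixes w :: "real ^ 'n::finite \<Rightarrow> real"
  assumes w: "w \<in> Espace s" and q: "critS CARD('n) \<ge> 1"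
  shows "D12sq s (\<lambda>x. c * w x) = c\<^sup>2 * D12sq s w"
proof -
  have [measurable]: "w \<in> borel_measurable lborel" using w unfolding Espace_def by auto
  define \<phi> where "\<phi> = (SOME \<phi>. approx_seq s w \<phi>)"
  have \<phi>: "approx_seq s w \<phi>" unfolding \<phi>_def by (rule approx_seq_some[OF w])
  have c\<phi>: "approx_seq s (\<lambda>x. c * w x) (\<lambda>k x. c * \<phi> k x)"
    by (rule approx_seq_cmult[OF \<phi>]) measurable
  then have "(\<lambda>x. c * w x) \<in> Espace s" unfolding Espace_def by auto
  then have "D12sq s (\<lambda>x. c * w x) = lim (\<lambda>k. D12sq_test (\<lambda>x. c * \<phi> k x))"
    unfolding D12sq_def
    by (rule approx_seq_D12sq_test_lim_unique[OF approx_seq_some c\<phi> _ q]) measurable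
  also have "\<dots> = lim (\<lambda>k. c\<^sup>2 * D12sq_test (\<phi> k))"
    by (simp add: D12sq_test_cmult approx_seqD(1)[OF \<phi>])
  also have "\<dots> = c\<^sup>2 * D12sq s w"
    unfolding D12sq_def \<phi>_def[symmetric] using approx_seq_D12sq_test_convergent[OF \<phi>]
    by (intro limI tendsto_mult_left) (simp add: convergent_LIMSEQ_iff)
  finally show ?thesis .
qed

lemma nn_integral_lborel_affine:
  fixes f :: "'a::euclidean_space \<Rightarrow> ennreal"
  assumes [measurable]: "f \<in> borel_measurable borel" and c: "c \<noteq> 0"
  shows "(\<integral>\<^sup>+ x. f x \<partial>lborel) = ennreal (\<bar>c\<bar> ^ DIM('a)) * (\<integral>\<^sup>+ x. f (t + c *\<^sub>R x) \<partial>lborel)"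
  by (subst lborel_affine[OF c, of t])
     (simp add: nn_integral_density nn_integral_distr nn_integral_cmult)

lemma nn_integral_lborel_reflect:
  fixes f :: "'a::euclidean_space \<Rightarrow> ennreal"
  assumes "f \<in> borel_measurable borel"
  shows "(\<integral>\<^sup>+ x. f (t - x) \<partial>lborel) = (\<integral>\<^sup>+ x. f x \<partial>lborel)"
  using nn_integral_lborel_affine[OF assms, of "-1" t] by simp

lemma nn_integral_lborel_translate:
  fixes f :: "'a::euclidean_space \<Rightarrow> ennreal"
  assumes "f \<in> borel_measurable borel"
  shows "(\<integral>\<^sup>+ x. f (x - t) \<partial>lborel) = (\<integral>\<^sup>+ x. f x \<partial>lborel)"
  using nn_integral_lborel_affine[OF assms, of 1 "- t"] by simp

text \<open>Integrability of \<open>min (\<bar>z\<bar>\<^sup>2) 1 / \<bar>z\<bar>\<^sup>N\<^sup>+\<^sup>2\<^sup>s\<close> on \<open>\<real>\<^sup>N\<close> is reduced to one dimension by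
  dominating it with a product of profiles \<open>\<bar>t\<bar>\<^sup>-\<^sup>\<gamma>\<close> (near \<open>0\<close>) and \<open>\<bar>t\<bar>\<^sup>-\<^sup>\<beta>\<close> (near \<open>\<infinity>\<close>) in the
  coordinates. The profile is \<open>\<infinity>\<close> at \<open>0\<close>, so that the bound also holds on the coordinate
  hyperplanes, where \<open>0 powr x = 0\<close> would break it.\<close>
definition half_profile :: "real \<Rightarrow> real \<Rightarrow> real \<Rightarrow> ennreal" where
  "half_profile \<gamma> \<beta> t =
    ennreal (t powr (- \<gamma>)) * indicator {0..1} t + ennreal (t powr (- \<beta>)) * indicator {1..} t"

definition profile :: "real \<Rightarrow> real \<Rightarrow> real \<Rightarrow> ennreal" where
  "profile \<gamma> \<beta> t = (if t = 0 then \<infinity> else half_profile \<gamma> \<beta> t + half_profile \<gamma> \<beta> (- t))"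

lemma half_profile_measurable [measurable]: "half_profile \<gamma> \<beta> \<in> borel_measurable borel"
  unfolding half_profile_def by measurable

lemma profile_measurable [measurable]: "profile \<gamma> \<beta> \<in> borel_measurable borel"
  unfolding profile_def by measurable

lemma nn_integral_profile_finite:
  assumes "0 \<le> \<gamma>" "\<gamma> < 1" "1 < \<beta>"
  shows "(\<integral>\<^sup>+ t. profile \<gamma> \<beta> t \<partial>lborel) < \<infinity>"
proof -
  have "(\<integral>\<^sup>+ t. ennreal (t powr (- \<gamma>)) * indicator {0..1} t \<partial>lborel) = ennreal (1 / (1 - \<gamma>))"
    by (rule nn_integral_has_integral_lebesgue') (use has_integral_powr_from_0[of "- \<gamma>" 1] assms in auto)
  moreover have "(\<integral>\<^sup>+ t. ennreal (t powr (- \<beta>)) * indicator {1..} t \<partial>lborel) = ennreal (- (1 / (1 - \<beta>)))"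
    by (rule nn_integral_has_integral_lebesgue') (use has_integral_powr_to_inf[of "- \<beta>" 1] assms in auto)
  ultimately have half: "(\<integral>\<^sup>+ t. half_profile \<gamma> \<beta> t \<partial>lborel) < \<infinity>"
    unfolding half_profile_def by (subst nn_integral_add) auto
  have "(\<integral>\<^sup>+ t. profile \<gamma> \<beta> t \<partial>lborel) = (\<integral>\<^sup>+ t. half_profile \<gamma> \<beta> t + half_profile \<gamma> \<beta> (0 - t) \<partial>lborel)"
    by (rule nn_integral_cong_AE) (use AE_lborel_singleton[of 0] in \<open>eventually_elim, simp add: profile_def\<close>)
  also have "\<dots> = (\<integral>\<^sup>+ t. half_profile \<gamma> \<beta> t \<partial>lborel) + (\<integral>\<^sup>+ t. half_profile \<gamma> \<beta> (0 - t) \<partial>lborel)"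
    by (rule nn_integral_add) auto
  also have "(\<integral>\<^sup>+ t. half_profile \<gamma> \<beta> (0 - t) \<partial>lborel) = (\<integral>\<^sup>+ t. half_profile \<gamma> \<beta> t \<partial>lborel)"
    by (rule nn_integral_lborel_reflect) simp
  finally show ?thesis using half by simp
qed

definition truncated_kernel :: "real \<Rightarrow> 'a::real_normed_vector \<Rightarrow> real" where
  "truncated_kernel a z = min ((norm z)\<^sup>2) 1 / norm z powr a"

lemma truncated_kernel_measurable [measurable]: "truncated_kernel a \<in> borel_measurable borel"
  unfolding truncated_kernel_def by measurable

lemma truncated_kernel_nonneg: "truncated_kernel a z \<ge> 0"
  unfolding truncated_kernel_def by simp

lemma truncated_kernel_le_prod:
  fixes z :: "'a::euclidean_space"
  assumes \<gamma>: "real DIM('a) * \<gamma> = a - 2" and \<beta>: "real DIM('a) * \<beta> = a" and "0 \<le> \<gamma>" "0 \<le> \<beta>"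
    and z: "\<And>b. b \<in> Basis \<Longrightarrow> z \<bullet> b \<noteq> 0"
  shows "truncated_kernel a z \<le>
    (\<Prod>b\<in>Basis. if \<bar>z \<bullet> b\<bar> \<le> 1 then \<bar>z \<bullet> b\<bar> powr (- \<gamma>) else \<bar>z \<bullet> b\<bar> powr (- \<beta>))"
proof -
  define r where "r = norm z"
  have coord: "0 < \<bar>z \<bullet> b\<bar>" "\<bar>z \<bullet> b\<bar> \<le> r" if "b \<in> Basis" for b
    using z that Basis_le_norm[of b z] by (auto simp: r_def)
  have r: "r > 0" using coord(1)[OF SOME_Basis] coord(2)[OF SOME_Basis] by linarith
  \<comment> \<open>\<open>r\<^sup>-\<^sup>\<gamma>\<close> (resp. \<open>r\<^sup>-\<^sup>\<beta>\<close>) is dominated by every factor, and its \<open>DIM('a)\<close>-th power is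
    the kernel\<close>
  show ?thesis
  proof (cases "r \<le> 1")
    case True
    have "truncated_kernel a z = r powr (2 - a)"
      using True r by (simp add: truncated_kernel_def r_def[symmetric] power_le_one powr_diff powr_numeral)
    also have "\<dots> = (\<Prod>b\<in>(Basis::'a set). r powr (- \<gamma>))"
      using r \<gamma> by (simp add: powr_power)
    also have "\<dots> \<le> (\<Prod>b\<in>Basis. if \<bar>z \<bullet> b\<bar> \<le> 1 then \<bar>z \<bullet> b\<bar> powr (- \<gamma>) else \<bar>z \<bullet> b\<bar> powr (- \<beta>))"
    proof (intro prod_mono conjI)
      fix b :: 'a assume b: "b \<in> Basis"
      then have "\<bar>z \<bullet> b\<bar> \<le> 1" using coord(2)[OF b] True by linarith
      then show "r powr (- \<gamma>) \<le> (if \<bar>z \<bullet> b\<bar> \<le> 1 then \<bar>z \<bullet> b\<bar> powr (- \<gamma>) else \<bar>z \<bullet> b\<bar> powr (- \<beta>))"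
        using powr_mono2'[of "- \<gamma>" "\<bar>z \<bullet> b\<bar>" r] coord[OF b] assms(3) by simp
    qed simp
    finally show ?thesis .
  next
    case False
    have "truncated_kernel a z = r powr (- a)"
      using False r by (simp add: truncated_kernel_def r_def[symmetric] one_le_power powr_minus_divide)
    also have "\<dots> = (\<Prod>b\<in>(Basis::'a set). r powr (- \<beta>))"
      using r \<beta> by (simp add: powr_power)
    also have "\<dots> \<le> (\<Prod>b\<in>Basis. if \<bar>z \<bullet> b\<bar> \<le> 1 then \<bar>z \<bullet> b\<bar> powr (- \<gamma>) else \<bar>z \<bullet> b\<bar> powr (- \<beta>))"
    proof (intro prod_mono conjI)
      fix b :: 'a assume b: "b \<in> Basis"
      show "r powr (- \<beta>) \<le> (if \<bar>z \<bullet> b\<bar> \<le> 1 then \<bar>z \<bullet> b\<bar> powr (- \<gamma>) else \<bar>z \<bullet> b\<bar> powr (- \<beta>))"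
      proof (cases "\<bar>z \<bullet> b\<bar> \<le> 1")
        case True
        have "r powr (- \<beta>) \<le> 1" using False assms(4) powr_mono2'[of "- \<beta>" 1 r] by simp
        also have "1 \<le> \<bar>z \<bullet> b\<bar> powr (- \<gamma>)"
          using True coord[OF b] assms(3) powr_mono2'[of "- \<gamma>" "\<bar>z \<bullet> b\<bar>" 1] by simp
        finally show ?thesis using True by simp
      qed (use coord[OF b] assms(4) in \<open>auto intro: powr_mono2'\<close>)
    qed simp
    finally show ?thesis .
  qed
qed

lemma truncated_kernel_le_prod_profile:
  fixes z :: "'a::euclidean_space"
  assumes "real DIM('a) * \<gamma> = a - 2" "real DIM('a) * \<beta> = a" "0 \<le> \<gamma>" "0 \<le> \<beta>"
  shows "ennreal (truncated_kernel a z) \<le> (\<Prod>b\<in>Basis. profile \<gamma> \<beta> (z \<bullet> b))"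
proof (cases "\<exists>b\<in>Basis. z \<bullet> b = 0")
  case True
  then obtain b0 where b0: "b0 \<in> Basis" "z \<bullet> b0 = 0" by blast
  have "profile \<gamma> \<beta> t \<noteq> 0" for t
    by (cases "t = 0"; cases "t > 0"; cases "\<bar>t\<bar> \<le> 1") (auto simp: profile_def half_profile_def indicator_def)
  then have "(\<Prod>b\<in>Basis. profile \<gamma> \<beta> (z \<bullet> b)) = profile \<gamma> \<beta> (z \<bullet> b0) * (\<Prod>b\<in>Basis - {b0}. profile \<gamma> \<beta> (z \<bullet> b))"
    "(\<Prod>b\<in>Basis - {b0}. profile \<gamma> \<beta> (z \<bullet> b)) \<noteq> 0"
    using b0 by (auto simp: prod.remove ennreal_prod_eq_0)
  then show ?thesis using b0 by (simp add: profile_def)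
next
  case False
  then have "ennreal (truncated_kernel a z) \<le>
      (\<Prod>b\<in>Basis. ennreal (if \<bar>z \<bullet> b\<bar> \<le> 1 then \<bar>z \<bullet> b\<bar> powr (- \<gamma>) else \<bar>z \<bullet> b\<bar> powr (- \<beta>)))"
    using truncated_kernel_le_prod[OF assms] by (simp add: ennreal_leI prod_ennreal)
  also have "\<dots> \<le> (\<Prod>b\<in>Basis. profile \<gamma> \<beta> (z \<bullet> b))"
    using False by (intro prod_mono_ennreal)
      (auto simp: profile_def half_profile_def indicator_def add_increasing add_increasing2)
  finally show ?thesis .
qed

lemma nn_integral_truncated_kernel_finite:
  assumes "0 < s" "s < 1" "DIM('a::euclidean_space) \<ge> 2"
  shows "(\<integral>\<^sup>+ z. ennreal (truncated_kernel (real DIM('a) + 2 * s) (z :: 'a)) \<partial>lborel) < \<infinity>"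
proof -
  define a where "a = real DIM('a) + 2 * s"
  define \<gamma> \<beta> where "\<gamma> = (a - 2) / real DIM('a)" and "\<beta> = a / real DIM('a)"
  have D: "real DIM('a) \<ge> 2" using assms(3) by simp
  have \<gamma>: "real DIM('a) * \<gamma> = a - 2" "0 \<le> \<gamma>" "\<gamma> < 1"
    unfolding \<gamma>_def a_def using D assms by (auto simp: divide_less_eq)
  have \<beta>: "real DIM('a) * \<beta> = a" "1 < \<beta>"
    unfolding \<beta>_def a_def using D assms by (auto simp: less_divide_eq)
  have "(\<integral>\<^sup>+ z. ennreal (truncated_kernel a (z :: 'a)) \<partial>lborel) \<le>
      (\<integral>\<^sup>+ z. (\<Prod>b\<in>Basis. profile \<gamma> \<beta> ((z :: 'a) \<bullet> b)) \<partial>lborel)"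
    using \<gamma> \<beta> by (intro nn_integral_mono truncated_kernel_le_prod_profile) auto
  also have "\<dots> = (\<integral>\<^sup>+ t. profile \<gamma> \<beta> t \<partial>lborel) ^ DIM('a)"
    by (subst nn_integral_lborel_prod) auto
  also have "\<dots> < \<infinity>"
    using nn_integral_profile_finite[OF \<gamma>(2,3) \<beta>(2)] by (simp add: power_less_top_ennreal)
  finally show ?thesis unfolding a_def .
qed

lemma test_fun_gagliardo_integrand_le:
  fixes f :: "real ^ 'n::finite \<Rightarrow> real"
  assumes "test_fun f"
  obtains C R where "C \<ge> 0" "\<And>x y. (f x - f y)\<^sup>2 / norm (x - y) powr a \<le>
    C * (indicator (cball 0 R) x + indicator (cball 0 R) y) * truncated_kernel a (x - y)"
proof -
  obtain L where L: "\<And>x y. \<bar>f x - f y\<bar> \<le> L * norm (x - y)" using test_fun_lipschitz[OF assms] by blast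
  obtain M where M: "\<And>x. \<bar>f x\<bar> \<le> M" using test_fun_bounded[OF assms] by blast
  obtain R where R: "\<And>x. R < norm x \<Longrightarrow> f x = 0" using test_fun_vanishing[OF assms] by blast
  define C where "C = L\<^sup>2 + 4 * M\<^sup>2"
  have "(f x - f y)\<^sup>2 / norm (x - y) powr a \<le>
      C * (indicator (cball 0 R) x + indicator (cball 0 R) y) * truncated_kernel a (x - y)" for x y
  proof (cases "x \<in> cball 0 R \<or> y \<in> cball 0 R")
    case False
    then show ?thesis using R[of x] R[of y] C_def truncated_kernel_nonneg[of a "x - y"] by simp
  next
    case True
    \<comment> \<open>Lipschitz bound for \<open>x\<close> near \<open>y\<close>, sup bound otherwise\<close>
    have "(f x - f y)\<^sup>2 \<le> C * min ((norm (x - y))\<^sup>2) 1"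
    proof (cases "(norm (x - y))\<^sup>2 \<le> 1")
      case True
      have "\<bar>f x - f y\<bar>\<^sup>2 \<le> (L * norm (x - y))\<^sup>2" by (rule power_mono[OF L]) simp
      then have "(f x - f y)\<^sup>2 \<le> L\<^sup>2 * (norm (x - y))\<^sup>2" by (simp add: power_mult_distrib)
      also have "\<dots> \<le> C * (norm (x - y))\<^sup>2" unfolding C_def by (intro mult_right_mono) auto
      finally show ?thesis using True by simp
    next
      case False
      have "\<bar>f x - f y\<bar>\<^sup>2 \<le> (2 * M)\<^sup>2" using M[of x] M[of y] by (intro power_mono) auto
      then have "(f x - f y)\<^sup>2 \<le> 4 * M\<^sup>2" by (simp add: power_mult_distrib)
      moreover have "min ((norm (x - y))\<^sup>2) 1 = 1" using False by simp
      ultimately show ?thesis unfolding C_def by (simp add: add_increasing)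
    qed
    also have "\<dots> \<le> C * (indicator (cball 0 R) x + indicator (cball 0 R) y) * min ((norm (x - y))\<^sup>2) 1"
      using True C_def by (intro mult_right_mono) (auto simp: indicator_def)
    finally show ?thesis
      unfolding truncated_kernel_def by (simp add: divide_right_mono)
  qed
  then show ?thesis using that[of C R] C_def by simp
qed

lemma nn_integral_indicator_kernel_finite:
  fixes K :: "'a::euclidean_space \<Rightarrow> real"
  assumes [measurable]: "K \<in> borel_measurable borel" and K: "\<And>z. K z \<ge> 0"
    "(\<integral>\<^sup>+ z. ennreal (K z) \<partial>lborel) < \<infinity>" and "C \<ge> 0"
  shows "(\<integral>\<^sup>+ x. \<integral>\<^sup>+ y. ennreal (C * (indicator (cball 0 R) x + indicator (cball 0 R) y) * K (x - y))
    \<partial>lborel \<partial>lborel) < \<infinity>"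
proof -
  define B where "B = cball (0::'a) R"
  have [measurable]: "B \<in> sets borel" unfolding B_def by simp
  note [measurable (raw)] = measurable_compose[OF _ assms(1)]
  define I where "I = (\<integral>\<^sup>+ z. ennreal (K z) \<partial>lborel)"
  have split: "ennreal (C * (indicator B x + indicator B y) * K (x - y)) =
      ennreal C * indicator B x * ennreal (K (x - y)) + ennreal C * indicator B y * ennreal (K (x - y))" for x y
    using K(1)[of "x - y"] \<open>C \<ge> 0\<close>
    by (simp add: indicator_def ennreal_mult ennreal_plus distrib_left distrib_right)
  have "(\<integral>\<^sup>+ x. \<integral>\<^sup>+ y. ennreal C * indicator B x * ennreal (K (x - y)) \<partial>lborel \<partial>lborel) =
      (\<integral>\<^sup>+ x. ennreal C * indicator B x * I \<partial>lborel)"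
    unfolding I_def by (subst nn_integral_cmult) (auto simp: nn_integral_lborel_reflect[of "\<lambda>z. ennreal (K z)"])
  also have "\<dots> = (\<integral>\<^sup>+ x. (ennreal C * I) * indicator B x \<partial>lborel)"
    by (simp add: mult_ac)
  also have "\<dots> = ennreal C * emeasure lborel B * I"
    by (subst nn_integral_cmult_indicator) (simp_all add: B_def mult_ac)
  finally have x_part: "(\<integral>\<^sup>+ x. \<integral>\<^sup>+ y. ennreal C * indicator B x * ennreal (K (x - y)) \<partial>lborel \<partial>lborel) =
      ennreal C * emeasure lborel B * I" .
  have "(\<integral>\<^sup>+ x. \<integral>\<^sup>+ y. ennreal C * indicator B y * ennreal (K (x - y)) \<partial>lborel \<partial>lborel) =
      (\<integral>\<^sup>+ y. \<integral>\<^sup>+ x. ennreal C * indicator B y * ennreal (K (x - y)) \<partial>lborel \<partial>lborel)"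
    by (rule lborel_pair.Fubini') measurable
  also have "\<dots> = (\<integral>\<^sup>+ y. ennreal C * indicator B y * I \<partial>lborel)"
    unfolding I_def
    by (subst nn_integral_cmult) (auto simp: nn_integral_lborel_translate[of "\<lambda>z. ennreal (K z)"])
  also have "\<dots> = (\<integral>\<^sup>+ y. (ennreal C * I) * indicator B y \<partial>lborel)"
    by (simp add: mult_ac)
  also have "\<dots> = ennreal C * emeasure lborel B * I"
    by (subst nn_integral_cmult_indicator) (simp_all add: B_def mult_ac)
  finally have y_part: "(\<integral>\<^sup>+ x. \<integral>\<^sup>+ y. ennreal C * indicator B y * ennreal (K (x - y)) \<partial>lborel \<partial>lborel) =
      ennreal C * emeasure lborel B * I" .
  have "(\<integral>\<^sup>+ x. \<integral>\<^sup>+ y. ennreal (C * (indicator B x + indicator B y) * K (x - y)) \<partial>lborel \<partial>lborel) =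
      (\<integral>\<^sup>+ x. (\<integral>\<^sup>+ y. ennreal C * indicator B x * ennreal (K (x - y)) \<partial>lborel) +
        (\<integral>\<^sup>+ y. ennreal C * indicator B y * ennreal (K (x - y)) \<partial>lborel) \<partial>lborel)"
    unfolding split by (intro nn_integral_cong nn_integral_add) measurable
  also have "\<dots> = 2 * (ennreal C * emeasure lborel B * I)"
    by (subst nn_integral_add) (measurable, simp add: x_part y_part mult_2)
  also have "\<dots> < \<infinity>"
    using emeasure_lborel_cball_finite[of "0::'a" R] K(2)
    unfolding I_def B_def by (simp add: ennreal_mult_less_top)
  finally show ?thesis unfolding B_def .
qed

lemma Gag_enn_test_fun_finite:
  fixes f :: "real ^ 'n::finite \<Rightarrow> real"
  assumes "test_fun f" "0 < s" "s < 1" "CARD('n) \<ge> 2"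
  shows "Gag_enn s f < \<infinity>"
proof -
  define a where "a = real CARD('n) + 2 * s"
  obtain C R where C: "C \<ge> 0" and bound: "\<And>x y. (f x - f y)\<^sup>2 / norm (x - y) powr a \<le>
      C * (indicator (cball 0 R) x + indicator (cball 0 R) y) * truncated_kernel a (x - y)"
    using test_fun_gagliardo_integrand_le[OF assms(1)] by blast
  have "Gag_enn s f \<le> (\<integral>\<^sup>+ x. \<integral>\<^sup>+ y. ennreal (C * (indicator (cball 0 R) x + indicator (cball 0 R) (y :: real ^ 'n)) *
      truncated_kernel a (x - y)) \<partial>lborel \<partial>lborel)"
    unfolding Gag_enn_def a_def[symmetric] by (intro nn_integral_mono ennreal_leI bound)
  also have "\<dots> < \<infinity>"
    using nn_integral_truncated_kernel_finite[where 'a="real ^ 'n"] assms(2-4) C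
    by (intro nn_integral_indicator_kernel_finite) (auto simp: a_def truncated_kernel_nonneg)
  finally show ?thesis .
qed

lemma Gag_enn_diff_le:
  fixes f g :: "real ^ 'n::finite \<Rightarrow> real"
  assumes [measurable]: "f \<in> borel_measurable lborel" "g \<in> borel_measurable lborel"
  shows "Gag_enn s f \<le> 2 * Gag_enn s g + 2 * Gag_enn s (\<lambda>x. f x - g x)"
proof -
  define a where "a = real CARD('n) + 2 * s"
  define A B where "A x y = (g x - g y)\<^sup>2 / norm (x - y) powr a"
    and "B x y = ((f x - g x) - (f y - g y))\<^sup>2 / norm (x - y) powr a" for x y
  have A_nonneg: "A x y \<ge> 0" and B_nonneg: "B x y \<ge> 0" for x y unfolding A_def B_def by simp_all
  have [measurable]: "(\<lambda>(x, y). A x y) \<in> borel_measurable (lborel \<Otimes>\<^sub>M lborel)"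
    "(\<lambda>(x, y). B x y) \<in> borel_measurable (lborel \<Otimes>\<^sub>M lborel)"
    unfolding A_def B_def by measurable
  have "ennreal ((f x - f y)\<^sup>2 / norm (x - y) powr a) \<le> 2 * ennreal (A x y) + 2 * ennreal (B x y)" for x y
  proof -
    have "(f x - f y)\<^sup>2 \<le> 2 * (g x - g y)\<^sup>2 + 2 * ((f x - g x) - (f y - g y))\<^sup>2"
      using sum_squares_bound[of "g x - g y" "(f x - g x) - (f y - g y)"]
      by (simp add: power2_eq_square algebra_simps)
    then have "(f x - f y)\<^sup>2 / norm (x - y) powr a \<le>
        (2 * (g x - g y)\<^sup>2 + 2 * ((f x - g x) - (f y - g y))\<^sup>2) / norm (x - y) powr a"
      by (rule divide_right_mono) simp
    also have "\<dots> = 2 * A x y + 2 * B x y"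
      unfolding A_def B_def by (simp add: add_divide_distrib)
    finally have "(f x - f y)\<^sup>2 / norm (x - y) powr a \<le> 2 * A x y + 2 * B x y" .
    then have "ennreal ((f x - f y)\<^sup>2 / norm (x - y) powr a) \<le> ennreal (2 * A x y + 2 * B x y)"
      by (rule ennreal_leI)
    also have "\<dots> = 2 * ennreal (A x y) + 2 * ennreal (B x y)"
      using A_nonneg[of x y] B_nonneg[of x y] by (simp add: ennreal_plus ennreal_mult)
    finally show ?thesis .
  qed
  then have "Gag_enn s f \<le> (\<integral>\<^sup>+ x. \<integral>\<^sup>+ y. 2 * ennreal (A x y) + 2 * ennreal (B x y) \<partial>lborel \<partial>lborel)"
    unfolding Gag_enn_def a_def[symmetric] by (intro nn_integral_mono)
  also have "\<dots> = (\<integral>\<^sup>+ x. 2 * (\<integral>\<^sup>+ y. ennreal (A x y) \<partial>lborel) + 2 * (\<integral>\<^sup>+ y. ennreal (B x y) \<partial>lborel)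
      \<partial>lborel)"
    by (intro nn_integral_cong) (simp add: nn_integral_add nn_integral_cmult)
  also have "\<dots> = 2 * Gag_enn s g + 2 * Gag_enn s (\<lambda>x. f x - g x)"
    unfolding Gag_enn_def a_def[symmetric] A_def B_def by (simp add: nn_integral_add nn_integral_cmult)
  finally show ?thesis .
qed

lemma Lp_pow_tendsto_zero_AE_subseq:
  fixes u :: "real ^ 'n::finite \<Rightarrow> real"
  assumes [measurable]: "u \<in> borel_measurable lborel" "\<And>k. \<phi> k \<in> borel_measurable lborel"
    and q: "q > 0" and lim: "(\<lambda>k. Lp_pow q (\<lambda>x. \<phi> k x - u x)) \<longlonglongrightarrow> 0"
  obtains r where "strict_mono r" "AE x in lborel. (\<lambda>n. \<phi> (r n) x) \<longlonglongrightarrow> u x"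
proof -
  obtain K where K: "\<And>k. k \<ge> K \<Longrightarrow> Lp_pow q (\<lambda>x. \<phi> k x - u x) < 1"
    using order_tendstoD(2)[OF lim, of 1] by (auto simp: eventually_sequentially)
  define v where "v n x = \<bar>\<phi> (n + K) x - u x\<bar> powr q" for n x
  have v_int: "integrable lborel (v n)" for n
    using K[of "n + K"] unfolding v_def Lp_pow_def
    by (intro integrableI_nonneg) (auto simp: less_top[symmetric] intro: order.strict_trans)
  have "Lp_pow q (\<lambda>x. \<phi> (n + K) x - u x) = ennreal (integral\<^sup>L lborel (v n))" for n
    unfolding Lp_pow_def v_def by (rule nn_integral_eq_integral[OF v_int[unfolded v_def]]) auto
  then have "(\<lambda>n. ennreal (integral\<^sup>L lborel (v n))) \<longlonglongrightarrow> ennreal 0"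
    using LIMSEQ_ignore_initial_segment[OF lim, of K] by simp
  then have "(\<lambda>n. integral\<^sup>L lborel (v n)) \<longlonglongrightarrow> 0"
    by (subst (asm) tendsto_ennreal_iff) (auto simp: v_def intro!: integral_nonneg_AE)
  moreover have "norm (v n x) = v n x" for n x by (simp add: v_def)
  ultimately have "(\<lambda>n. \<integral>x. norm (v n x) \<partial>lborel) \<longlonglongrightarrow> 0" by simp
  then obtain r where r: "strict_mono r" "AE x in lborel. (\<lambda>n. v (r n) x) \<longlonglongrightarrow> 0"
    using tendsto_L1_AE_subseq[where u=v, OF v_int] by blast
  have "AE x in lborel. (\<lambda>n. \<phi> (r n + K) x) \<longlonglongrightarrow> u x"
    using r(2)
  proof eventually_elim
    case (elim x)
    then have "(\<lambda>n. v (r n) x powr (1 / q)) \<longlonglongrightarrow> 0 powr (1 / q)"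
      by (intro tendsto_powr') (use q in \<open>auto simp: v_def\<close>)
    then have "(\<lambda>n. \<bar>\<phi> (r n + K) x - u x\<bar>) \<longlonglongrightarrow> 0"
      using q by (simp add: v_def powr_powr)
    then show ?case by (simp add: tendsto_rabs_zero_iff LIM_zero_iff)
  qed
  moreover have "strict_mono (\<lambda>n. r n + K)" using r(1) by (simp add: strict_mono_def)
  ultimately show ?thesis using that by blast
qed

lemma Gag_enn_le_liminf:
  fixes u :: "real ^ 'n::finite \<Rightarrow> real"
  assumes [measurable]: "u \<in> borel_measurable lborel" "\<And>k. \<phi> k \<in> borel_measurable lborel"
    and conv: "AE x in lborel. (\<lambda>n. \<phi> n x) \<longlonglongrightarrow> u x"
  shows "Gag_enn s u \<le> liminf (\<lambda>n. Gag_enn s (\<phi> n))"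
proof -
  define a where "a = real CARD('n) + 2 * s"
  define T where "T w x y = ennreal ((w x - w y)\<^sup>2 / norm (x - y) powr a)" for w :: "real ^ 'n \<Rightarrow> real" and x y
  have [measurable]: "(\<lambda>y. T (\<phi> n) x y) \<in> borel_measurable lborel"
    "(\<lambda>x. \<integral>\<^sup>+ y. T (\<phi> n) x y \<partial>lborel) \<in> borel_measurable lborel" for n x
    unfolding T_def by measurable
  have "AE x in lborel. (\<integral>\<^sup>+ y. T u x y \<partial>lborel) \<le> liminf (\<lambda>n. \<integral>\<^sup>+ y. T (\<phi> n) x y \<partial>lborel)"
    using conv
  proof eventually_elim
    case (elim x)
    have "AE y in lborel. T u x y = liminf (\<lambda>n. T (\<phi> n) x y)"
      using conv
    proof eventually_elim
      case (elim y)
      have "(\<lambda>n. T (\<phi> n) x y) \<longlonglongrightarrow> T u x y"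
        using \<open>(\<lambda>n. \<phi> n x) \<longlonglongrightarrow> u x\<close> elim unfolding T_def
        by (cases "x = y") (auto intro!: tendsto_ennrealI tendsto_intros)
      then show ?case by (simp add: lim_imp_Liminf)
    qed
    then have "(\<integral>\<^sup>+ y. T u x y \<partial>lborel) = (\<integral>\<^sup>+ y. liminf (\<lambda>n. T (\<phi> n) x y) \<partial>lborel)"
      by (rule nn_integral_cong_AE)
    also have "\<dots> \<le> liminf (\<lambda>n. \<integral>\<^sup>+ y. T (\<phi> n) x y \<partial>lborel)"
      by (rule nn_integral_liminf) measurable
    finally show ?case .
  qed
  then have "Gag_enn s u \<le> (\<integral>\<^sup>+ x. liminf (\<lambda>n. \<integral>\<^sup>+ y. T (\<phi> n) x y \<partial>lborel) \<partial>lborel)"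
    unfolding Gag_enn_def a_def[symmetric] T_def[symmetric] by (rule nn_integral_mono_AE)
  also have "\<dots> \<le> liminf (\<lambda>n. Gag_enn s (\<phi> n))"
    unfolding Gag_enn_def a_def[symmetric] T_def[symmetric] by (rule nn_integral_liminf) measurable
  finally show ?thesis .
qed

text \<open>Along an a.e. convergent subsequence of an approximating sequence, Fatou's lemma bounds the
  Gagliardo seminorm by the (eventually bounded) seminorms of the approximants.\<close>
lemma Gag_enn_Espace_finite:
  fixes u :: "real ^ 'n::finite \<Rightarrow> real"
  assumes u: "u \<in> Espace s" and s: "0 < s" "s < 1" and N: "CARD('n) \<ge> 3"
  shows "Gag_enn s u < \<infinity>"
proof -
  have u_meas [measurable]: "u \<in> borel_measurable lborel" using u unfolding Espace_def by auto
  obtain \<phi> where \<phi>: "approx_seq s u \<phi>" using u unfolding Espace_def by auto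
  note t = approx_seqD(1)[OF \<phi>]
  have \<phi>_meas [measurable]: "\<phi> k \<in> borel_measurable lborel" for k
    using test_fun_borel_measurable[OF t] by simp
  have "critS CARD('n) > 0" unfolding critS_def using N by simp
  then obtain r where r: "strict_mono r" "AE x in lborel. (\<lambda>n. \<phi> (r n) x) \<longlonglongrightarrow> u x"
    by (rule Lp_pow_tendsto_zero_AE_subseq[OF u_meas \<phi>_meas _ approx_seqD(3)[OF \<phi>]])
  have "\<forall>e>0. \<exists>K. \<forall>k\<ge>K. \<forall>m\<ge>K. D12sq_test (\<lambda>x. \<phi> k x - \<phi> m x) + Gag s (\<lambda>x. \<phi> k x - \<phi> m x) < e"
    using \<phi> unfolding approx_seq_def by (elim conjE)
  from this[rule_format, of 1] obtain K where K: "\<forall>k\<ge>K. \<forall>m\<ge>K.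
      D12sq_test (\<lambda>x. \<phi> k x - \<phi> m x) + Gag s (\<lambda>x. \<phi> k x - \<phi> m x) < 1"
    by auto
  define B where "B = 2 * Gag_enn s (\<phi> K) + 2"
  have bound: "Gag_enn s (\<phi> k) \<le> B" if "k \<ge> K" for k
  proof -
    have "Gag s (\<lambda>x. \<phi> k x - \<phi> K x) < 1"
      using K that D12sq_test_nonneg[of "\<lambda>x. \<phi> k x - \<phi> K x"] by force
    moreover have "Gag_enn s (\<lambda>x. \<phi> k x - \<phi> K x) < \<infinity>"
      using Gag_enn_test_fun_finite[OF test_fun_diff[OF t t] s] N by simp
    ultimately have "Gag_enn s (\<lambda>x. \<phi> k x - \<phi> K x) \<le> 1"
      unfolding Gag_def by (cases "Gag_enn s (\<lambda>x. \<phi> k x - \<phi> K x)") auto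
    have "Gag_enn s (\<phi> k) \<le> 2 * Gag_enn s (\<phi> K) + 2 * Gag_enn s (\<lambda>x. \<phi> k x - \<phi> K x)"
      by (rule Gag_enn_diff_le) measurable
    also have "\<dots> \<le> 2 * Gag_enn s (\<phi> K) + 2 * 1"
      using \<open>Gag_enn s (\<lambda>x. \<phi> k x - \<phi> K x) \<le> 1\<close> by (intro add_left_mono mult_left_mono) auto
    finally show ?thesis unfolding B_def by simp
  qed
  have "Gag_enn s u \<le> liminf (\<lambda>n. Gag_enn s (\<phi> (r n)))"
    by (rule Gag_enn_le_liminf[OF u_meas _ r(2)]) measurable
  also have "\<dots> \<le> limsup (\<lambda>n. Gag_enn s (\<phi> (r n)))"
    by (rule Liminf_le_Limsup) simp
  also have "\<dots> \<le> B"
  proof (rule Limsup_bounded)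
    have "Gag_enn s (\<phi> (r n)) \<le> B" if "n \<ge> K" for n
      using seq_suble[OF r(1), of n] that by (intro bound) linarith
    then show "\<forall>\<^sub>F n in sequentially. Gag_enn s (\<phi> (r n)) \<le> B"
      unfolding eventually_sequentially by blast
  qed
  also have "B < \<infinity>"
    using Gag_enn_test_fun_finite[OF t s] N unfolding B_def by (simp add: ennreal_mult_less_top)
  finally show ?thesis .
qed

lemma AE_lborel_imp_ex:
  assumes "AE x in (lborel :: 'a::euclidean_space measure). P x"
  shows "\<exists>x. P x"
proof (rule ccontr)
  assume "\<nexists>x. P x"
  with assms have "AE x in (lborel :: 'a measure). False" by simp
  then show False by (simp add: AE_iff_null null_sets_def)
qed

lemma emeasure_lborel_outside_ball: "emeasure lborel {x :: 'a::euclidean_space. R < norm x} = \<infinity>"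
proof -
  have "{x :: 'a. R < norm x} = UNIV - cball 0 R" by auto
  moreover have "emeasure lborel (UNIV - cball (0 :: 'a) R) = \<infinity>"
    using emeasure_lborel_cball_finite[of "0 :: 'a" R] by (subst emeasure_Diff) auto
  ultimately show ?thesis by simp
qed

text \<open>If the Gagliardo seminorm of \<open>u\<close> vanished, \<open>u\<close> would be a.e. equal to a constant \<open>c \<noteq> 0\<close>,
  which has infinite \<open>L\<^sup>q\<close> distance from every compactly supported function.\<close>
lemma Gag_enn_Espace_nonzero:
  fixes u :: "real ^ 'n::finite \<Rightarrow> real"
  assumes u: "u \<in> Espace s" and u0: "\<not> (AE x in lborel. u x = 0)"
  shows "Gag_enn s u \<noteq> 0"
proof
  assume G0: "Gag_enn s u = 0"
  have [measurable]: "u \<in> borel_measurable lborel" using u unfolding Espace_def by auto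
  obtain \<phi> where \<phi>: "approx_seq s u \<phi>" using u unfolding Espace_def by auto
  define a where "a = real CARD('n) + 2 * s"
  have "AE x in lborel. (\<integral>\<^sup>+ y. ennreal ((u x - u y)\<^sup>2 / norm (x - y) powr a) \<partial>lborel) = 0"
    using G0 unfolding Gag_enn_def a_def[symmetric] by (subst (asm) nn_integral_0_iff_AE) auto
  then have "AE x in lborel. AE y in lborel. u y = u x"
  proof eventually_elim
    case (elim x)
    then have "AE y in lborel. ennreal ((u x - u y)\<^sup>2 / norm (x - y) powr a) = 0"
      by (subst (asm) nn_integral_0_iff_AE) auto
    then show ?case using AE_lborel_singleton[of x] by eventually_elim auto
  qed
  then obtain x0 where x0: "AE y in lborel. u y = u x0" using AE_lborel_imp_ex by blast
  have c: "u x0 \<noteq> 0" using x0 u0 by force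
  have "Lp_pow (critS CARD('n)) (\<lambda>x. \<phi> k x - u x) = \<infinity>" for k
  proof -
    have [measurable]: "\<phi> k \<in> borel_measurable lborel"
      using test_fun_borel_measurable[OF approx_seqD(1)[OF \<phi>]] by simp
    obtain R where R: "\<And>x. R < norm x \<Longrightarrow> \<phi> k x = 0"
      using test_fun_vanishing[OF approx_seqD(1)[OF \<phi>]] by blast
    have "\<infinity> = (\<integral>\<^sup>+ x. ennreal (\<bar>u x0\<bar> powr critS CARD('n)) * indicator {x :: real ^ 'n. R < norm x} x \<partial>lborel)"
      using c by (simp add: nn_integral_cmult_indicator emeasure_lborel_outside_ball)
    also have "\<dots> \<le> Lp_pow (critS CARD('n)) (\<lambda>x. \<phi> k x - u x)"
      unfolding Lp_pow_def using x0 by (intro nn_integral_mono_AE) (auto simp: indicator_def R)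
    finally show ?thesis by (simp add: top_unique)
  qed
  then show False using approx_seqD(3)[OF \<phi>] by (simp add: LIMSEQ_const_iff)
qed

lemma Gag_Espace_pos:
  fixes u :: "real ^ 'n::finite \<Rightarrow> real"
  assumes "u \<in> Espace s" "\<not> (AE x in lborel. u x = 0)" "0 < s" "s < 1" "CARD('n) \<ge> 3"
  shows "Gag s u > 0"
  using Gag_enn_Espace_finite[OF assms(1,3-5)] Gag_enn_Espace_nonzero[OF assms(1,2)]
  unfolding Gag_def by (simp add: enn2real_positive_iff less_top[symmetric] zero_less_iff_neq_zero)

lemma Pfun_cmult:
  fixes u :: "real ^ 'n::finite \<Rightarrow> real"
  assumes "u \<in> Espace s" "critS CARD('n) \<ge> 1"
  shows "Pfun s p (\<lambda>x. c * u x) =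
    c\<^sup>2 * ((real CARD('n) - 2) / 2 * D12sq s u + (real CARD('n) - 2 * s) / 2 * Gag s u) -
    real CARD('n) / p * (\<bar>c\<bar> powr p * integral\<^sup>L lborel (\<lambda>x. \<bar>u x\<bar> powr p))"
proof -
  have "u \<in> borel_measurable lborel" using assms(1) unfolding Espace_def by auto
  then show ?thesis
    unfolding Pfun_def D12sq_cmult[OF assms] Gag_cmult[OF \<open>u \<in> borel_measurable lborel\<close>]
    by (simp add: abs_mult powr_mult algebra_simps)
qed

lemma Pfun_radial_derivative:
  fixes u :: "real ^ 'n::finite \<Rightarrow> real"
  assumes "u \<in> Espace s" "critS CARD('n) \<ge> 1" "p \<noteq> 0"
  defines "X \<equiv> (real CARD('n) - 2) / 2 * D12sq s u + (real CARD('n) - 2 * s) / 2 * Gag s u"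
    and "I \<equiv> integral\<^sup>L lborel (\<lambda>x. \<bar>u x\<bar> powr p)"
  shows "((\<lambda>t. Pfun s p (\<lambda>x. u x + t * u x)) has_real_derivative 2 * X - real CARD('n) * I) (at 0)"
proof -
  have "((\<lambda>t. (1 + t)\<^sup>2 * X - real CARD('n) / p * ((1 + t) powr p * I)) has_real_derivative
      2 * X - real CARD('n) / p * (p * I)) (at 0)"
    by (auto intro!: derivative_eq_intros)
  then have "((\<lambda>t. (1 + t)\<^sup>2 * X - real CARD('n) / p * ((1 + t) powr p * I)) has_real_derivative
      2 * X - real CARD('n) * I) (at 0)"
    using assms(3) by simp
  then show ?thesis
  proof (rule has_field_derivative_transform_within_open[where S="{-1<..}"])
    fix t :: real assume t: "t \<in> {-1<..}"
    have "Pfun s p (\<lambda>x. u x + t * u x) = Pfun s p (\<lambda>x. (1 + t) * u x)"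
      by (simp add: algebra_simps)
    also have "\<dots> = (1 + t)\<^sup>2 * X - real CARD('n) / p * (\<bar>1 + t\<bar> powr p * I)"
      unfolding X_def I_def by (rule Pfun_cmult[OF assms(1,2)])
    also have "\<dots> = (1 + t)\<^sup>2 * X - real CARD('n) / p * ((1 + t) powr p * I)"
      using t by simp
    finally show "(1 + t)\<^sup>2 * X - real CARD('n) / p * ((1 + t) powr p * I) = Pfun s p (\<lambda>x. u x + t * u x)"
      by (rule sym)
  qed auto
qed

lemma one_le_critS: "3 \<le> N \<Longrightarrow> 1 \<le> critS N"
  unfolding critS_def by (simp add: field_simps)

lemma two_less_critFrac: "3 \<le> N \<Longrightarrow> 0 < s \<Longrightarrow> s < 1 \<Longrightarrow> 2 < critFrac N s"
  unfolding critFrac_def by (simp add: field_simps)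

theorem lemma5p5:
  fixes s p :: real and u :: "real ^ 'n::finite \<Rightarrow> real"
  assumes "CARD('n) \<ge> 3"
    and "0 < s" and "s < 1"
    and "critFrac CARD('n) s < p" and "p < critS CARD('n)"
    and "u \<in> Mset s p"
  shows "\<exists>v\<in>Espace s. \<not> ((\<lambda>t. Pfun s p (\<lambda>x. u x + t * v x)) has_real_derivative 0) (at 0)"
proof -
  have u: "u \<in> Espace s" "\<not> (AE x in lborel. u x = 0)" and P0: "Pfun s p u = 0"
    using assms(6) unfolding Mset_def by auto
  have N: "real CARD('n) \<ge> 3" and q: "critS CARD('n) \<ge> 1"
    using assms(1) one_le_critS by auto
  have p: "p > 2" using two_less_critFrac[OF assms(1-3)] assms(4) by simp
  define X where "X = (real CARD('n) - 2) / 2 * D12sq s u + (real CARD('n) - 2 * s) / 2 * Gag s u"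
  have "X > 0"
    using D12sq_nonneg[OF u(1)] Gag_Espace_pos[OF u assms(2,3,1)] N assms(3)
    unfolding X_def by (simp add: add_nonneg_pos)
  \<comment> \<open>\<open>P(u) = 0\<close> identifies the \<open>L\<^sup>p\<close> term, so the radial derivative is \<open>(2 - p) X\<close>\<close>
  have Lp: "real CARD('n) * integral\<^sup>L lborel (\<lambda>x. \<bar>u x\<bar> powr p) = p * X"
    using P0 p unfolding Pfun_def X_def by (simp add: field_simps)
  have "((\<lambda>t. Pfun s p (\<lambda>x. u x + t * u x)) has_real_derivative
      2 * X - real CARD('n) * integral\<^sup>L lborel (\<lambda>x. \<bar>u x\<bar> powr p)) (at 0)"
    unfolding X_def using p by (intro Pfun_radial_derivative u(1) q) simp
  then have deriv: "((\<lambda>t. Pfun s p (\<lambda>x. u x + t * u x)) has_real_derivative (2 - p) * X) (at 0)"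
    unfolding Lp by (simp add: left_diff_distrib)
  show ?thesis
  proof (rule bexI[OF notI u(1)])
    assume "((\<lambda>t. Pfun s p (\<lambda>x. u x + t * u x)) has_real_derivative 0) (at 0)"
    then show False using DERIV_unique[OF _ deriv] p \<open>X > 0\<close> by force
  qed
qed

end
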